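(* Consider an ergodic Jackson network process $\mathbf{X}$ (setting in the context) with stationary distribution $\xi(\mathbf{n})=\prod_{j=1}^{J}\prod_{k=1}^{n_j}\frac{\eta_j}{\mu_j(k)}C(j)^{-1}$. Let $\boldsymbol{\gamma}=(\gamma_j:j\in\overline{J})\in[0,1]^{\overline{J}}$, define $\boldsymbol{\alpha}=(\alpha_j:j\in\overline{J}_0)$ by $\alpha_0=1$, $\alpha_j=\gamma_j$ for $j\in\overline{J}$, and let $r^{(\boldsymbol{\alpha})}=(I-rI_{(1-\boldsymbol{\alpha})})^{-1}rI_{\boldsymbol{\alpha}}$ be the randomized-skipping modification of the extended routing matrix $r$. Let $\mathbf{X}^{(\boldsymbol{\gamma})}$ be the continuous-time Markov chain on $\mathbb{N}_0^{\overline{J}}$ whose positive transition rates are $q(\mathbf{n},\mathbf{n}+\mathbf{e}_i)=\lambda r^{(\boldsymbol{\alpha})}(0,i)$ for $i\in\overline{J}$, $q(\mathbf{n},\mathbf{n}-\mathbf{e}_j+\mathbf{e}_i)=1_{[n_j>0]}\gamma_j\mu_j(n_j)r^{(\boldsymbol{\alpha})}(j,i)$ for $i,j\in\overline{J}$, $i\ne j$, and $q(\mathbf{n},\mathbf{n}-\mathbf{e}_j)=1_{[n_j>0]}\gamma_j\mu_j(n_j)r^{(\boldsymbol{\alpha})}(j,0)$ for $j\in\overline{J}$. Let $B(\boldsymbol{\gamma})=\{j\in\overline{J}:\gamma_j=0\}$ and $W(\boldsymbol{\gamma})=\overline{J}\setminus B(\boldsymbol{\gamma})$. Then $\xi$ is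 a stationary distribution of $\mathbf{X}^{(\boldsymbol{\gamma})}$. If $B(\boldsymbol{\gamma})=\emptyset$, then $\mathbf{X}^{(\boldsymbol{\gamma})}$ is ergodic. If $B(\boldsymbol{\gamma})\neq\emptyset$, then $\mathbf{X}^{(\boldsymbol{\gamma})}$ is not irreducible on $\mathbb{N}_0^{\overline{J}}$, its state space splits into the infinitely many closed subspaces $\mathbb{N}_0^{W(\boldsymbol{\gamma})}\times\{(n_j:j\in B(\boldsymbol{\gamma}))\}$, $(n_j:j\in B(\boldsymbol{\gamma}))\in\mathbb{N}_0^{B(\boldsymbol{\gamma})}$, and for every probability distribution $\varphi$ on $\mathbb{N}_0^{B(\boldsymbol{\gamma})}$ the distribution \[ \xi^{(\boldsymbol{\gamma})}_\varphi(\mathbf{n})=\prod_{j\in W(\boldsymbol{\gamma})}\prod_{k=1}^{n_j}\frac{\eta_j}{\mu_j(k)}C(j)^{-1}\cdot\varphi(n_j:j\in B(\boldsymbol{\gamma})),\qquad \mathbf{n}\in\mathbb{N}_0^{\overline{J}}, \] is a stationary distribution of $\mathbf{X}^{(\boldsymbol{\gamma})}$.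
   Context: Jackson network setting: node set $\overline{J}=\{1,\dots,J\}$, extended node set $\overline{J}_0=\{0,1,\dots,J\}$ (0 = external source/sink). External Poisson arrivals at node $j$ with rates $\lambda_j\ge0$, $\lambda=\sum_j\lambda_j>0$; single servers with infinite waiting room, FCFS, service intensity $\mu_j(n_j)>0$ when $n_j>0$ customers are at node $j$. Extended routing matrix $r=(r(i,j):i,j\in\overline{J}_0)$ is stochastic and irreducible with $r(0,j)=\lambda_j/\lambda$, $r(0,0)=0$; $r(j,0)$ is the probability of leaving the network from $j$. $\eta=(\eta_j:j\in\overline{J}_0)$ is the extended traffic solution: $\eta_0=\lambda$ and $\eta_j=\sum_{i\in\overline{J}_0}\eta_i r(i,j)$ for all $j\in\overline{J}_0$. The Jackson network process $\mathbf{X}$ is the Markov chain on $\mathbb{N}_0^{\overline{J}}$ with rates $q(\mathbf{n},\mathbf{n}+\mathbf{e}_i)=\lambda r(0,i)$, $q(\mathbf{n},\mathbf{n}-\mathbf{e}_j+\mathbf{e}_i)=1_{[n_j>0]}\mu_j(n_j)r(j,i)$ ($i\neq j$), $q(\mathbf{n},\mathbf{n}-\mathbf{e}_j)=1_{[n_j>0]}\mu_j(n_j)r(j,0)$; it is assumed ergodic, and $C(j)=\sum_{n\ge0}\prod_{k=1}^n\eta_j/\mu_j(k)<\infty$ are the normalizing constants. $\mathbf{e}_j$ is the $j$-th unit vector. $I_{\boldsymbol{\alpha}}$, $I_{(1-\boldsymbol{\alpha})}$ are diagonal matrices indexed by $\overline{J}_0$ with entries $\alpha_j$, resp. $1-\alpha_j$;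 $r^{(\boldsymbol{\alpha})}$ is the transition matrix of randomized skipping (a proposed next state $j$ drawn from the current row of $r$ is accepted with probability $\alpha_j$; if rejected, a new proposal is drawn from row $j$ of $r$ without time passing, until acceptance). *)

theory Defs
  imports "HOL-Analysis.Analysis"
begin

text \<open>A CTMC is given by its state space S and its off-diagonal transition
rates q m n (m \<noteq> n). Rates outside S and on the diagonal are irrelevant.\<close>

definition out_rate :: "'s set \<Rightarrow> ('s \<Rightarrow> 's \<Rightarrow> real) \<Rightarrow> 's \<Rightarrow> real" where
  "out_rate S q m = (\<Sum>\<^sub>\<infinity> n\<in>S - {m}. q m n)"

text \<open>Stationary distribution: a probability on S satisfying the global balance
equations pi Q = 0.\<close>
definition stationary_dist :: "'s set \<Rightarrow> ('s \<Rightarrow> 's \<Rightarrow> real) \<Rightarrow> ('s \<Rightarrow> real) \<Rightarrow> bool" where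
  "stationary_dist S q p \<longleftrightarrow>
     (\<forall>n\<in>S. 0 \<le> p n) \<and> (p has_sum 1) S \<and>
     (\<forall>m\<in>S. (q m) summable_on (S - {m}) \<and>
            ((\<lambda>n. p n * q n m) has_sum (p m * out_rate S q m)) (S - {m}))"

definition irreducible_ctmc :: "'s set \<Rightarrow> ('s \<Rightarrow> 's \<Rightarrow> real) \<Rightarrow> bool" where
  "irreducible_ctmc S q \<longleftrightarrow>
     (\<forall>m\<in>S. \<forall>n\<in>S. (m, n) \<in> {(a, b). a \<in> S \<and> b \<in> S \<and> a \<noteq> b \<and> 0 < q a b}\<^sup>*)"

definition closed_subset :: "'s set \<Rightarrow> ('s \<Rightarrow> 's \<Rightarrow> real) \<Rightarrow> 's set \<Rightarrow> bool" where
  "closed_subset S q A \<longleftrightarrow> A \<subseteq> S \<and> (\<forall>m\<in>A. \<forall>n\<in>S - A. q m n = 0)"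

definition jump_prob :: "'s set \<Rightarrow> ('s \<Rightarrow> 's \<Rightarrow> real) \<Rightarrow> 's \<Rightarrow> 's \<Rightarrow> real" where
  "jump_prob S q m n = (if m = n then 0 else q m n / out_rate S q m)"

text \<open>Taboo probabilities of the jump chain Y started in i:
  taboo_prob S q i k j = P_i(Y_k = j, Y_1 \<noteq> i, ..., Y_k \<noteq> i).\<close>
primrec taboo_prob :: "'s set \<Rightarrow> ('s \<Rightarrow> 's \<Rightarrow> real) \<Rightarrow> 's \<Rightarrow> nat \<Rightarrow> 's \<Rightarrow> real" where
  "taboo_prob S q i 0 j = (if j = i then 1 else 0)"
| "taboo_prob S q i (Suc k) j =
     (if j = i then 0 else (\<Sum>\<^sub>\<infinity> l\<in>S. taboo_prob S q i k l * jump_prob S q l j))"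

text \<open>State i is positive recurrent: the jump chain returns to i almost surely
(the probabilities of first return at step k+1 sum to 1), and the expected
return time of the CTMC, E_i[sum over the jumps before return of the holding times]
= sum_k sum_j P_i(Y_k = j, k < return time) / q(j), is finite.\<close>
definition pos_recurrent_state :: "'s set \<Rightarrow> ('s \<Rightarrow> 's \<Rightarrow> real) \<Rightarrow> 's \<Rightarrow> bool" where
  "pos_recurrent_state S q i \<longleftrightarrow>
     ((\<lambda>k. \<Sum>\<^sub>\<infinity> l\<in>S. taboo_prob S q i k l * jump_prob S q l i) has_sum 1) UNIV \<and>
     (\<lambda>(k, j). taboo_prob S q i k j / out_rate S q j) summable_on (UNIV \<times> S)"

definition ergodic_ctmc :: "'s set \<Rightarrow> ('s \<Rightarrow> 's \<Rightarrow> real) \<Rightarrow> bool" where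
  "ergodic_ctmc S q \<longleftrightarrow> irreducible_ctmc S q \<and> (\<forall>i\<in>S. pos_recurrent_state S q i)"

definition net_states :: "nat \<Rightarrow> (nat \<Rightarrow> nat) set" where
  "net_states J = {n. \<forall>j. j \<notin> {1..J} \<longrightarrow> n j = 0}"

definition net_rates ::
  "nat \<Rightarrow> (nat \<Rightarrow> real) \<Rightarrow> (nat \<Rightarrow> nat \<Rightarrow> real) \<Rightarrow> (nat \<Rightarrow> nat \<Rightarrow> real)
     \<Rightarrow> (nat \<Rightarrow> nat) \<Rightarrow> (nat \<Rightarrow> nat) \<Rightarrow> real" where
  "net_rates J a s p n n' =
     (\<Sum>i\<in>{1..J}. if n' = n(i := n i + 1) then a i else 0)
   + (\<Sum>j\<in>{1..J}. \<Sum>i\<in>{1..J} - {j}.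
        if 0 < n j \<and> n' = n(j := n j - 1, i := n i + 1) then s j (n j) * p j i else 0)
   + (\<Sum>j\<in>{1..J}. if 0 < n j \<and> n' = n(j := n j - 1) then s j (n j) * p j 0 else 0)"

text \<open>Randomized skipping matrix r^(alpha) = (I - r I_(1-alpha))^{-1} r I_alpha,
as matrices indexed by {0..J}: the unique X (supported on {0..J}^2) with
(I - r I_(1-alpha)) X = r I_alpha.\<close>
definition skip_matrix :: "nat \<Rightarrow> (nat \<Rightarrow> nat \<Rightarrow> real) \<Rightarrow> (nat \<Rightarrow> real) \<Rightarrow> nat \<Rightarrow> nat \<Rightarrow> real" where
  "skip_matrix J r \<alpha> = (THE X.
      (\<forall>i j. (J < i \<or> J < j) \<longrightarrow> X i j = 0) \<and>
      (\<forall>i\<le>J. \<forall>j\<le>J. X i j - (\<Sum>k\<le>J. r i k * (1 - \<alpha> k) * X k j) = r i j * \<alpha> j))"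

definition norm_const :: "(nat \<Rightarrow> real) \<Rightarrow> (nat \<Rightarrow> nat \<Rightarrow> real) \<Rightarrow> nat \<Rightarrow> real" where
  "norm_const \<eta> \<mu> j = (\<Sum>m. \<Prod>k\<in>{1..m}. \<eta> j / \<mu> j k)"

definition node_factor :: "(nat \<Rightarrow> real) \<Rightarrow> (nat \<Rightarrow> nat \<Rightarrow> real) \<Rightarrow> nat \<Rightarrow> nat \<Rightarrow> real" where
  "node_factor \<eta> \<mu> j m = (\<Prod>k\<in>{1..m}. \<eta> j / \<mu> j k) / norm_const \<eta> \<mu> j"

end

theory Submission
  imports Defs
begin

text \<open>Randomized skipping changes the routing matrix \<open>r\<close> into \<open>r\<^sup>\<alpha>\<close> but not the
  throughputs: \<open>\<eta>\<^sub>j \<gamma>\<^sub>j\<close> solves the traffic equations of \<open>r\<^sup>\<alpha>\<close>, and the slowed-down service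
  rates \<open>\<gamma>\<^sub>j \<mu>\<^sub>j(k)\<close> keep the local balance equations of each Jackson factor. Local balance
  together with the traffic equations yields global balance for every product of these factors
  with an arbitrary distribution of the frozen queues (\<open>\<gamma>\<^sub>j = 0\<close>): frozen nodes neither serve
  nor receive customers, since the columns of \<open>r\<^sup>\<alpha>\<close> belonging to them vanish, so their queue
  lengths are conserved and cut the state space into closed fibres. Without frozen nodes,
  \<open>r\<^sup>\<alpha>\<close> has a positive entry wherever \<open>r\<close> has one, which makes the chain irreducible, and a
  strictly positive stationary distribution with finite total jump rate forces every state
  to be positive recurrent.\<close>

lemma has_sum_sum:
  fixes f :: "'i \<Rightarrow> 'a \<Rightarrow> 'b::topological_comm_monoid_add"
  assumes "finite I" "\<And>t. t \<in> I \<Longrightarrow> (f t has_sum s t) A"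
  shows "((\<lambda>x. \<Sum>t\<in>I. f t x) has_sum (\<Sum>t\<in>I. s t)) A"
  using assms
proof (induction I rule: finite_induct)
  case (insert t I)
  have "((\<lambda>x. f t x + (\<Sum>t\<in>I. f t x)) has_sum (s t + (\<Sum>t\<in>I. s t))) A"
    by (intro has_sum_add) (use insert in auto)
  then show ?case using insert by simp
qed simp

lemma has_sum_if_eq:
  "y \<in> A \<Longrightarrow> ((\<lambda>x. if x = y then c else 0) has_sum (c::'a::topological_comm_monoid_add)) A"
  by (rule has_sum_finite_neutralI[where B="{y}"]) auto

lemma has_sum_sum_if_eq:
  fixes c :: "'i \<Rightarrow> 'a::topological_comm_monoid_add"
  assumes "finite I" and "\<And>t. t \<in> I \<Longrightarrow> c t \<noteq> 0 \<Longrightarrow> g t \<in> A"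
  shows "((\<lambda>x. \<Sum>t\<in>I. if x = g t then c t else 0) has_sum (\<Sum>t\<in>I. c t)) A"
proof (rule has_sum_sum[OF assms(1)])
  fix t assume "t \<in> I"
  show "((\<lambda>x. if x = g t then c t else 0) has_sum c t) A"
  proof (cases "c t = 0")
    case True
    then have "(\<lambda>x. if x = g t then c t else 0) = (\<lambda>_. 0)" by auto
    then show ?thesis using True by simp
  qed (use assms(2) \<open>t \<in> I\<close> in \<open>simp add: has_sum_if_eq\<close>)
qed

lemma summable_on_sum:
  fixes f :: "'i \<Rightarrow> 'a \<Rightarrow> 'b::{topological_comm_monoid_add, t2_space}"
  assumes "finite I" "\<And>t. t \<in> I \<Longrightarrow> f t summable_on A"
  shows "(\<lambda>x. \<Sum>t\<in>I. f t x) summable_on A"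
proof -
  have "((\<lambda>x. \<Sum>t\<in>I. f t x) has_sum (\<Sum>t\<in>I. infsum (f t) A)) A"
    using assms by (intro has_sum_sum) (auto intro: has_sum_infsum)
  then show ?thesis by (rule has_sum_imp_summable)
qed

lemma sum_off_diagonal_swap:
  fixes f :: "'a \<Rightarrow> 'a \<Rightarrow> 'b::comm_monoid_add"
  assumes "finite A"
  shows "(\<Sum>j\<in>A. \<Sum>i\<in>A-{j}. f i j) = (\<Sum>i\<in>A. \<Sum>j\<in>A-{i}. f i j)"
proof -
  have "(\<Sum>j\<in>A. \<Sum>i\<in>A-{j}. f i j) = (\<Sum>j\<in>A. \<Sum>i\<in>A. if i = j then 0 else f i j)"
    using assms by (intro sum.cong refl sum.mono_neutral_cong_left) auto
  also have "\<dots> = (\<Sum>i\<in>A. \<Sum>j\<in>A. if i = j then 0 else f i j)" by (rule sum.swap)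
  also have "\<dots> = (\<Sum>i\<in>A. \<Sum>j\<in>A-{i}. f i j)"
    using assms by (intro sum.cong refl sum.mono_neutral_cong_right) auto
  finally show ?thesis .
qed

lemma sum_atMost_zero_plus:
  fixes f :: "nat \<Rightarrow> 'a::comm_monoid_add"
  shows "(\<Sum>i\<le>J. f i) = f 0 + (\<Sum>i\<in>{1..J}. f i)"
proof -
  have "{..J} = insert 0 {1..J}" by auto
  then show ?thesis by simp
qed

lemma has_sum_mult_Times:
  fixes f :: "'a \<Rightarrow> real" and g :: "'b \<Rightarrow> real"
  assumes f: "(f has_sum a) A" and g: "(g has_sum b) B"
    and "\<And>x. x \<in> A \<Longrightarrow> 0 \<le> f x" and "\<And>y. y \<in> B \<Longrightarrow> 0 \<le> g y"
  shows "((\<lambda>(x, y). f x * g y) has_sum a * b) (A \<times> B)"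
proof -
  have rows: "((\<lambda>y. case (x, y) of (x, y) \<Rightarrow> f x * g y) has_sum f x * b) B" for x
    using has_sum_cmult_right[OF g, of "f x"] by simp
  have col: "((\<lambda>x. f x * b) has_sum a * b) A"
    using has_sum_cmult_left[OF f, of b] by simp
  show ?thesis
    by (intro has_sum_SigmaI[OF rows col] summable_on_SigmaI[OF rows has_sum_imp_summable[OF col]])
       (use assms(3,4) in auto)
qed

section \<open>Configurations and product forms\<close>

definition configurations :: "nat set \<Rightarrow> (nat \<Rightarrow> nat) set" where
  "configurations A = {n. \<forall>j. j \<notin> A \<longrightarrow> n j = 0}"

lemma net_states_eq_configurations: "net_states J = configurations {1..J}"
  unfolding net_states_def configurations_def ..

lemma configurations_empty: "configurations {} = {\<lambda>_. 0}"
  by (auto simp: configurations_def fun_eq_iff)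

lemma has_sum_configurations_insert:
  assumes "w \<notin> A"
  shows "(h has_sum c) (configurations (insert w A)) \<longleftrightarrow>
    ((\<lambda>(k, n). h (n(w := k))) has_sum c) (UNIV \<times> configurations A)"
proof (rule has_sum_reindex_bij_witness[where j="\<lambda>n. (n w, n(w := 0))" and i="\<lambda>(k, n). n(w := k)"])
  fix b :: "nat \<times> (nat \<Rightarrow> nat)" assume "b \<in> UNIV \<times> configurations A"
  then obtain k n where kn: "b = (k, n)" "n \<in> configurations A" by auto
  then have "n w = 0" using assms by (auto simp: configurations_def)
  then show "((case b of (k, n) \<Rightarrow> n(w := k)) w, (case b of (k, n) \<Rightarrow> n(w := k))(w := 0)) = b"
    using kn by auto
  show "(case b of (k, n) \<Rightarrow> n(w := k)) \<in> configurations (insert w A)"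
    using kn by (auto simp: configurations_def)
qed (auto simp: configurations_def)

lemma has_sum_product_form:
  fixes f :: "nat \<Rightarrow> nat \<Rightarrow> real" and \<phi> :: "(nat \<Rightarrow> nat) \<Rightarrow> real"
  assumes "finite W" "W \<inter> B = {}"
    and f_sum: "\<And>j. j \<in> W \<Longrightarrow> (f j has_sum 1) UNIV"
    and f_nonneg: "\<And>j k. j \<in> W \<Longrightarrow> 0 \<le> f j k"
    and \<phi>_sum: "(\<phi> has_sum c) (configurations B)"
    and \<phi>_nonneg: "\<And>b. b \<in> configurations B \<Longrightarrow> 0 \<le> \<phi> b"
  shows "((\<lambda>n. (\<Prod>j\<in>W. f j (n j)) * \<phi> (\<lambda>j. if j \<in> B then n j else 0)) has_sum c)
           (configurations (W \<union> B))"
  using assms(1,2) f_sum f_nonneg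
proof (induction W rule: finite_induct)
  case empty
  show ?case unfolding Un_empty_left
  proof (rule has_sum_cong[THEN iffD2, OF _ \<phi>_sum])
    fix n :: "nat \<Rightarrow> nat" assume "n \<in> configurations B"
    then have "(\<lambda>j. if j \<in> B then n j else 0) = n" by (auto simp: fun_eq_iff configurations_def)
    then show "(\<Prod>j\<in>{}. f j (n j)) * \<phi> (\<lambda>j. if j \<in> B then n j else 0) = \<phi> n" by simp
  qed
next
  case (insert w W)
  let ?F = "\<lambda>n. (\<Prod>j\<in>W. f j (n j)) * \<phi> (\<lambda>j. if j \<in> B then n j else 0)"
  let ?G = "\<lambda>n. (\<Prod>j\<in>insert w W. f j (n j)) * \<phi> (\<lambda>j. if j \<in> B then n j else 0)"
  have "((\<lambda>(k, n). f w k * ?F n) has_sum 1 * c) (UNIV \<times> configurations (W \<union> B))"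
  proof (rule has_sum_mult_Times)
    show "(?F has_sum c) (configurations (W \<union> B))" using insert by auto
    show "0 \<le> ?F n" if "n \<in> configurations (W \<union> B)" for n
      using insert(6) \<phi>_nonneg that by (intro mult_nonneg_nonneg prod_nonneg) (auto simp: configurations_def)
  qed (use insert in auto)
  moreover have "f w k * ?F n = ?G (n(w := k))" for k n
  proof -
    have "(\<Prod>j\<in>W. f j ((n(w := k)) j)) = (\<Prod>j\<in>W. f j (n j))"
      using insert(2) by (intro prod.cong refl) auto
    moreover have "(\<lambda>j. if j \<in> B then (n(w := k)) j else 0) = (\<lambda>j. if j \<in> B then n j else 0)"
      using insert(4) by (auto simp: fun_eq_iff)
    ultimately show ?thesis using insert(1,2) by simp
  qed
  ultimately have "((\<lambda>(k, n). ?G (n(w := k))) has_sum c) (UNIV \<times> configurations (W \<union> B))"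
    by simp
  then have "(?G has_sum c) (configurations (insert w (W \<union> B)))"
    using has_sum_configurations_insert[of w "W \<union> B" ?G c] insert(2,4) by blast
  then show ?case by simp
qed

section \<open>Balance equations of network rates\<close>

lemma net_states_upd:
  "n \<in> net_states J \<Longrightarrow> i \<in> {1..J} \<Longrightarrow> n(i := k) \<in> net_states J"
  by (auto simp: net_states_def)

lemma arrival_eq_iff:
  "(m = n(i := n i + 1)) \<longleftrightarrow> (0 < m i \<and> n = (m(i := m i - 1) :: nat \<Rightarrow> nat))"
  by (auto simp: fun_eq_iff)

lemma transfer_eq_iff:
  "i \<noteq> j \<Longrightarrow> (0 < n j \<and> m = n(j := n j - 1, i := n i + 1)) \<longleftrightarrow>
     (0 < m i \<and> n = (m(i := m i - 1, j := m j + 1) :: nat \<Rightarrow> nat))"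
  by (auto simp: fun_eq_iff)

lemma departure_eq_iff:
  "(0 < n j \<and> m = n(j := n j - 1)) \<longleftrightarrow> (n = (m(j := m j + 1) :: nat \<Rightarrow> nat))"
  by (auto simp: fun_eq_iff)

definition net_out_rate ::
  "nat \<Rightarrow> (nat \<Rightarrow> real) \<Rightarrow> (nat \<Rightarrow> nat \<Rightarrow> real) \<Rightarrow> (nat \<Rightarrow> nat \<Rightarrow> real)
     \<Rightarrow> (nat \<Rightarrow> nat) \<Rightarrow> real"
where
  "net_out_rate J a s p m = (\<Sum>i\<in>{1..J}. a i)
     + (\<Sum>j\<in>{1..J}. \<Sum>i\<in>{1..J}-{j}. if 0 < m j then s j (m j) * p j i else 0)
     + (\<Sum>j\<in>{1..J}. if 0 < m j then s j (m j) * p j 0 else 0)"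

definition net_inflow ::
  "nat \<Rightarrow> (nat \<Rightarrow> real) \<Rightarrow> (nat \<Rightarrow> nat \<Rightarrow> real) \<Rightarrow> (nat \<Rightarrow> nat \<Rightarrow> real)
     \<Rightarrow> ((nat \<Rightarrow> nat) \<Rightarrow> real) \<Rightarrow> (nat \<Rightarrow> nat) \<Rightarrow> real"
where
  "net_inflow J a s p \<pi> m = (\<Sum>i\<in>{1..J}. if 0 < m i then \<pi> (m(i := m i - 1)) * a i else 0)
     + (\<Sum>j\<in>{1..J}. \<Sum>i\<in>{1..J}-{j}.
          if 0 < m i then \<pi> (m(i := m i - 1, j := m j + 1)) * (s j (m j + 1) * p j i) else 0)
     + (\<Sum>j\<in>{1..J}. \<pi> (m(j := m j + 1)) * (s j (m j + 1) * p j 0))"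

lemma net_rates_has_sum_out_rate:
  assumes m: "m \<in> net_states J"
  shows "(net_rates J a s p m has_sum net_out_rate J a s p m) (net_states J - {m})"
proof -
  let ?S = "net_states J - {m}"
  have if_conj: "\<And>P Q c. (if P \<and> Q then c else (0::real)) = (if Q then (if P then c else 0) else 0)"
    by auto
  have "((\<lambda>n. \<Sum>i\<in>{1..J}. if n = m(i := m i + 1) then a i else 0) has_sum (\<Sum>i\<in>{1..J}. a i)) ?S"
    using m by (intro has_sum_sum_if_eq) (auto simp: net_states_upd fun_eq_iff dest: fun_cong)
  moreover have "((\<lambda>n. \<Sum>j\<in>{1..J}. \<Sum>i\<in>{1..J} - {j}. if n = m(j := m j - 1, i := m i + 1)
        then (if 0 < m j then s j (m j) * p j i else 0) else 0)
      has_sum (\<Sum>j\<in>{1..J}. \<Sum>i\<in>{1..J}-{j}. if 0 < m j then s j (m j) * p j i else 0)) ?S"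
    using m by (intro has_sum_sum has_sum_sum_if_eq finite_Diff finite_atLeastAtMost)
      (auto simp: net_states_upd fun_eq_iff dest: fun_cong)
  moreover have "((\<lambda>n. \<Sum>j\<in>{1..J}. if n = m(j := m j - 1)
        then (if 0 < m j then s j (m j) * p j 0 else 0) else 0)
      has_sum (\<Sum>j\<in>{1..J}. if 0 < m j then s j (m j) * p j 0 else 0)) ?S"
    using m by (intro has_sum_sum_if_eq) (auto simp: net_states_upd fun_eq_iff split: if_splits dest: fun_cong)
  ultimately show ?thesis
    unfolding net_rates_def if_conj net_out_rate_def by (intro has_sum_add)
qed

lemma out_rate_net_rates:
  "m \<in> net_states J \<Longrightarrow> out_rate (net_states J) (net_rates J a s p) m = net_out_rate J a s p m"
  using net_rates_has_sum_out_rate unfolding out_rate_def has_sum_iff by metis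

text \<open>Substituting the predecessor state turns each incoming rate into a point mass.\<close>
lemma weighted_net_rates_into:
  fixes \<pi> :: "(nat \<Rightarrow> nat) \<Rightarrow> real"
  shows "\<pi> n * net_rates J a s p n m =
       (\<Sum>i\<in>{1..J}. if n = m(i := m i - 1) then (if 0 < m i then \<pi> (m(i := m i - 1)) * a i else 0) else 0)
     + (\<Sum>j\<in>{1..J}. \<Sum>i\<in>{1..J} - {j}. if n = m(i := m i - 1, j := m j + 1)
          then (if 0 < m i then \<pi> (m(i := m i - 1, j := m j + 1)) * (s j (m j + 1) * p j i) else 0) else 0)
     + (\<Sum>j\<in>{1..J}. if n = m(j := m j + 1) then \<pi> (m(j := m j + 1)) * (s j (m j + 1) * p j 0) else 0)"
proof -
  have transfer: "\<pi> n * (if 0 < n j \<and> m = n(j := n j - 1, i := n i + 1) then s j (n j) * p j i else 0) =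
      (if n = m(i := m i - 1, j := m j + 1)
       then (if 0 < m i then \<pi> (m(i := m i - 1, j := m j + 1)) * (s j (m j + 1) * p j i) else 0) else 0)"
    if "i \<in> {1..J} - {j}" for i j
  proof -
    have ij: "i \<noteq> j" using that by auto
    show ?thesis using transfer_eq_iff[OF ij] ij by auto
  qed
  show ?thesis
    unfolding net_rates_def distrib_left sum_distrib_left
    using arrival_eq_iff[of m n] departure_eq_iff[of n _ m]
    by (intro arg_cong2[where f=plus] sum.cong refl transfer) auto
qed

lemma net_rates_has_sum_inflow:
  fixes \<pi> :: "(nat \<Rightarrow> nat) \<Rightarrow> real"
  assumes m: "m \<in> net_states J"
  shows "((\<lambda>n. \<pi> n * net_rates J a s p n m) has_sum net_inflow J a s p \<pi> m) (net_states J - {m})"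
  unfolding weighted_net_rates_into net_inflow_def
proof (intro has_sum_add)
  show "((\<lambda>n. \<Sum>i\<in>{1..J}. if n = m(i := m i - 1) then (if 0 < m i then \<pi> (m(i := m i - 1)) * a i else 0) else 0)
      has_sum (\<Sum>i\<in>{1..J}. if 0 < m i then \<pi> (m(i := m i - 1)) * a i else 0)) (net_states J - {m})"
    using m by (intro has_sum_sum_if_eq) (auto simp: net_states_upd fun_eq_iff split: if_splits dest: fun_cong)
  show "((\<lambda>n. \<Sum>j\<in>{1..J}. \<Sum>i\<in>{1..J} - {j}. if n = m(i := m i - 1, j := m j + 1)
        then (if 0 < m i then \<pi> (m(i := m i - 1, j := m j + 1)) * (s j (m j + 1) * p j i) else 0) else 0)
      has_sum (\<Sum>j\<in>{1..J}. \<Sum>i\<in>{1..J}-{j}.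
        if 0 < m i then \<pi> (m(i := m i - 1, j := m j + 1)) * (s j (m j + 1) * p j i) else 0))
      (net_states J - {m})"
    using m by (intro has_sum_sum has_sum_sum_if_eq finite_Diff finite_atLeastAtMost)
      (auto simp: net_states_upd fun_eq_iff split: if_splits dest: fun_cong)
  show "((\<lambda>n. \<Sum>j\<in>{1..J}. if n = m(j := m j + 1) then \<pi> (m(j := m j + 1)) * (s j (m j + 1) * p j 0) else 0)
      has_sum (\<Sum>j\<in>{1..J}. \<pi> (m(j := m j + 1)) * (s j (m j + 1) * p j 0))) (net_states J - {m})"
    using m by (intro has_sum_sum_if_eq) (auto simp: net_states_upd fun_eq_iff dest: fun_cong)
qed

text \<open>Summing the traffic equations over all nodes: what enters from outside leaves to the outside.\<close>
lemma traffic_exit_flow: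
  fixes v a :: "nat \<Rightarrow> real" and p :: "nat \<Rightarrow> nat \<Rightarrow> real"
  assumes traffic: "\<And>i. i \<in> {1..J} \<Longrightarrow> v i = a i + (\<Sum>j\<in>{1..J}. v j * p j i)"
    and rows: "\<And>j. j \<in> {1..J} \<Longrightarrow> (\<Sum>i\<le>J. p j i) = 1"
  shows "(\<Sum>j\<in>{1..J}. v j * p j 0) = (\<Sum>i\<in>{1..J}. a i)"
proof -
  have "(\<Sum>i\<in>{1..J}. v i) = (\<Sum>i\<in>{1..J}. a i) + (\<Sum>i\<in>{1..J}. \<Sum>j\<in>{1..J}. v j * p j i)"
    by (simp add: traffic sum.distrib)
  also have "(\<Sum>i\<in>{1..J}. \<Sum>j\<in>{1..J}. v j * p j i) = (\<Sum>j\<in>{1..J}. v j * (\<Sum>i\<in>{1..J}. p j i))"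
    by (subst sum.swap) (simp add: sum_distrib_left)
  also have "\<dots> = (\<Sum>j\<in>{1..J}. v j - v j * p j 0)"
  proof (intro sum.cong refl)
    fix j assume "j \<in> {1..J}"
    then have "(\<Sum>i\<in>{1..J}. p j i) = 1 - p j 0"
      using rows sum_atMost_zero_plus[of "p j" J] by fastforce
    then show "v j * (\<Sum>i\<in>{1..J}. p j i) = v j - v j * p j 0" by (simp add: right_diff_distrib)
  qed
  finally show ?thesis by (simp add: sum_subtractf)
qed

lemma net_out_rate_eq:
  assumes rows: "\<And>j. j \<in> {1..J} \<Longrightarrow> (\<Sum>i\<le>J. p j i) = 1"
  shows "net_out_rate J a s p m
    = (\<Sum>i\<in>{1..J}. a i) + (\<Sum>j\<in>{1..J}. if 0 < m j then s j (m j) * (1 - p j j) else 0)"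
proof -
  have "(\<Sum>i\<in>{1..J}-{j}. if 0 < m j then s j (m j) * p j i else 0)
      + (if 0 < m j then s j (m j) * p j 0 else 0) = (if 0 < m j then s j (m j) * (1 - p j j) else 0)"
    if j: "j \<in> {1..J}" for j
  proof -
    have "(\<Sum>i\<in>{1..J}-{j}. p j i) + p j 0 = 1 - p j j"
      using rows[OF j] j by (simp add: sum_atMost_zero_plus sum.remove)
    then show ?thesis by (cases "0 < m j") (simp_all flip: sum_distrib_left distrib_left)
  qed
  then show ?thesis
    unfolding net_out_rate_def add.assoc sum.distrib[symmetric] by simp
qed

lemma net_inflow_local_balance:
  fixes \<pi> :: "(nat \<Rightarrow> nat) \<Rightarrow> real"
  assumes m: "m \<in> net_states J"
    and local_balance: "\<And>n j. n \<in> net_states J \<Longrightarrow> j \<in> {1..J} \<Longrightarrow> 0 < n j \<Longrightarrow>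
          \<pi> n * s j (n j) = \<pi> (n(j := n j - 1)) * v j"
  shows "net_inflow J a s p \<pi> m
    = (\<Sum>i\<in>{1..J}. if 0 < m i then \<pi> (m(i := m i - 1)) * (a i + (\<Sum>j\<in>{1..J}-{i}. v j * p j i)) else 0)
      + \<pi> m * (\<Sum>j\<in>{1..J}. v j * p j 0)"
proof -
  let ?m = "\<lambda>i. m(i := m i - 1)"
  have "\<pi> (m(i := m i - 1, j := m j + 1)) * s j (m j + 1) = \<pi> (?m i) * v j"
    if j: "j \<in> {1..J}" and i: "i \<in> {1..J} - {j}" for i j
  proof -
    let ?n = "m(i := m i - 1, j := m j + 1)"
    have "?n(j := ?n j - 1) = ?m i" using i by (auto simp: fun_eq_iff)
    then show ?thesis using local_balance[of ?n j] m i j by (simp add: net_states_upd)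
  qed
  then have "(\<Sum>j\<in>{1..J}. \<Sum>i\<in>{1..J}-{j}.
        if 0 < m i then \<pi> (m(i := m i - 1, j := m j + 1)) * (s j (m j + 1) * p j i) else 0)
      = (\<Sum>j\<in>{1..J}. \<Sum>i\<in>{1..J}-{j}. if 0 < m i then \<pi> (?m i) * (v j * p j i) else 0)"
    by (intro sum.cong refl) (simp add: mult.assoc[symmetric])
  also have "\<dots> = (\<Sum>i\<in>{1..J}. \<Sum>j\<in>{1..J}-{i}. if 0 < m i then \<pi> (?m i) * (v j * p j i) else 0)"
    by (rule sum_off_diagonal_swap) simp
  finally have transfers: "(\<Sum>j\<in>{1..J}. \<Sum>i\<in>{1..J}-{j}.
        if 0 < m i then \<pi> (m(i := m i - 1, j := m j + 1)) * (s j (m j + 1) * p j i) else 0)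
      = (\<Sum>i\<in>{1..J}. \<Sum>j\<in>{1..J}-{i}. if 0 < m i then \<pi> (?m i) * (v j * p j i) else 0)" .
  have "\<pi> (m(j := m j + 1)) * s j (m j + 1) = \<pi> m * v j" if "j \<in> {1..J}" for j
    using local_balance[of "m(j := m j + 1)" j] m that by (simp add: net_states_upd)
  then have departures: "(\<Sum>j\<in>{1..J}. \<pi> (m(j := m j + 1)) * (s j (m j + 1) * p j 0))
      = \<pi> m * (\<Sum>j\<in>{1..J}. v j * p j 0)"
    unfolding sum_distrib_left by (intro sum.cong refl) (simp add: mult.assoc[symmetric])
  have "(if 0 < m i then \<pi> (?m i) * a i else 0)
      + (\<Sum>j\<in>{1..J}-{i}. if 0 < m i then \<pi> (?m i) * (v j * p j i) else 0)
      = (if 0 < m i then \<pi> (?m i) * (a i + (\<Sum>j\<in>{1..J}-{i}. v j * p j i)) else 0)" for i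
    by (cases "0 < m i") (simp_all add: sum_distrib_left distrib_left)
  then show ?thesis
    unfolding net_inflow_def transfers departures by (simp only: sum.distrib[symmetric])
qed

lemma net_inflow_eq_outflow:
  fixes \<pi> :: "(nat \<Rightarrow> nat) \<Rightarrow> real"
  assumes m: "m \<in> net_states J"
    and local_balance: "\<And>n j. n \<in> net_states J \<Longrightarrow> j \<in> {1..J} \<Longrightarrow> 0 < n j \<Longrightarrow>
          \<pi> n * s j (n j) = \<pi> (n(j := n j - 1)) * v j"
    and traffic: "\<And>i. i \<in> {1..J} \<Longrightarrow> v i = a i + (\<Sum>j\<in>{1..J}. v j * p j i)"
    and rows: "\<And>j. j \<in> {1..J} \<Longrightarrow> (\<Sum>i\<le>J. p j i) = 1"
  shows "net_inflow J a s p \<pi> m = \<pi> m * net_out_rate J a s p m"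
proof -
  have "\<pi> (m(i := m i - 1)) * (a i + (\<Sum>j\<in>{1..J}-{i}. v j * p j i)) = \<pi> m * (s i (m i) * (1 - p i i))"
    if i: "i \<in> {1..J}" and m_i: "0 < m i" for i
  proof -
    have "a i + (\<Sum>j\<in>{1..J}-{i}. v j * p j i) = v i * (1 - p i i)"
      using traffic[OF i] i by (simp add: sum.remove algebra_simps)
    then show ?thesis using local_balance[OF m i m_i] by (simp add: mult.assoc[symmetric])
  qed
  then have "(\<Sum>i\<in>{1..J}. if 0 < m i then \<pi> (m(i := m i - 1)) * (a i + (\<Sum>j\<in>{1..J}-{i}. v j * p j i)) else 0)
      = (\<Sum>i\<in>{1..J}. if 0 < m i then \<pi> m * (s i (m i) * (1 - p i i)) else 0)"
    by (intro sum.cong refl) auto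
  then have "net_inflow J a s p \<pi> m
      = (\<Sum>i\<in>{1..J}. if 0 < m i then \<pi> m * (s i (m i) * (1 - p i i)) else 0) + \<pi> m * (\<Sum>i\<in>{1..J}. a i)"
    using net_inflow_local_balance[OF m local_balance] traffic_exit_flow[OF traffic rows] by simp
  then show ?thesis
    using net_out_rate_eq[OF rows, where a=a and s=s and m=m] by (simp add: sum_distrib_left distrib_left if_distrib)
qed

lemma net_rates_stationary:
  fixes \<pi> :: "(nat \<Rightarrow> nat) \<Rightarrow> real"
  assumes nonneg: "\<And>n. n \<in> net_states J \<Longrightarrow> 0 \<le> \<pi> n"
    and total: "(\<pi> has_sum 1) (net_states J)"
    and local_balance: "\<And>n j. n \<in> net_states J \<Longrightarrow> j \<in> {1..J} \<Longrightarrow> 0 < n j \<Longrightarrow>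
          \<pi> n * s j (n j) = \<pi> (n(j := n j - 1)) * v j"
    and traffic: "\<And>i. i \<in> {1..J} \<Longrightarrow> v i = a i + (\<Sum>j\<in>{1..J}. v j * p j i)"
    and rows: "\<And>j. j \<in> {1..J} \<Longrightarrow> (\<Sum>i\<le>J. p j i) = 1"
  shows "stationary_dist (net_states J) (net_rates J a s p) \<pi>"
  unfolding stationary_dist_def
proof (intro conjI ballI)
  fix m assume m: "m \<in> net_states J"
  show "net_rates J a s p m summable_on net_states J - {m}"
    using net_rates_has_sum_out_rate[OF m] by (rule has_sum_imp_summable)
  show "((\<lambda>n. \<pi> n * net_rates J a s p n m) has_sum
      \<pi> m * out_rate (net_states J) (net_rates J a s p) m) (net_states J - {m})"
    using net_rates_has_sum_inflow[OF m, of \<pi> a s p] net_inflow_eq_outflow[OF m local_balance traffic rows]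
    by (simp add: out_rate_net_rates[OF m])
qed (use nonneg total in auto)


lemma net_rates_nonneg:
  assumes "\<And>i. i \<in> {1..J} \<Longrightarrow> 0 \<le> a i"
    and "\<And>j k. j \<in> {1..J} \<Longrightarrow> 1 \<le> k \<Longrightarrow> 0 \<le> s j k"
    and "\<And>j i. j \<in> {1..J} \<Longrightarrow> i \<le> J \<Longrightarrow> 0 \<le> p j i"
  shows "0 \<le> net_rates J a s p m n"
  unfolding net_rates_def using assms
  by (intro add_nonneg_nonneg sum_nonneg) (auto intro!: mult_nonneg_nonneg)

lemma net_rates_eq_0:
  assumes "\<And>i. i \<in> {1..J} \<Longrightarrow> n = m(i := m i + 1) \<Longrightarrow> a i = 0"
    and "\<And>j i. j \<in> {1..J} \<Longrightarrow> i \<in> {1..J} - {j} \<Longrightarrow> 0 < m j \<Longrightarrow>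
           n = m(j := m j - 1, i := m i + 1) \<Longrightarrow> s j (m j) * p j i = 0"
    and "\<And>j. j \<in> {1..J} \<Longrightarrow> 0 < m j \<Longrightarrow> n = m(j := m j - 1) \<Longrightarrow> s j (m j) * p j 0 = 0"
  shows "net_rates J a s p m n = 0"
proof -
  have "(\<Sum>i\<in>{1..J}. if n = m(i := m i + 1) then a i else 0) = 0"
    using assms(1) by (intro sum.neutral) auto
  moreover have "(\<Sum>j\<in>{1..J}. \<Sum>i\<in>{1..J} - {j}.
      if 0 < m j \<and> n = m(j := m j - 1, i := m i + 1) then s j (m j) * p j i else 0) = 0"
    using assms(2) by (intro sum.neutral ballI) auto
  moreover have "(\<Sum>j\<in>{1..J}. if 0 < m j \<and> n = m(j := m j - 1) then s j (m j) * p j 0 else 0) = 0"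
    using assms(3) by (intro sum.neutral) auto
  ultimately show ?thesis unfolding net_rates_def by simp
qed

lemma finite_net_rates_predecessors: "finite {l. net_rates J a s p l n \<noteq> 0}"
proof (rule finite_subset)
  let ?P = "(\<lambda>i. n(i := n i - 1)) ` {1..J} \<union> (\<lambda>k. n(k := n k + 1)) ` {1..J}
     \<union> (\<lambda>(i, k). n(i := n i - 1, k := n k + 1)) ` ({1..J} \<times> {1..J})"
  show "finite ?P" by auto
  show "{l. net_rates J a s p l n \<noteq> 0} \<subseteq> ?P"
  proof
    fix l assume "l \<in> {l. net_rates J a s p l n \<noteq> 0}"
    then have "net_rates J a s p l n \<noteq> 0" by simp
    then show "l \<in> ?P"
    proof (rule contrapos_np)
      assume l: "l \<notin> ?P"
      show "net_rates J a s p l n = 0"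
      proof (rule net_rates_eq_0)
        fix i assume "i \<in> {1..J}" "n = l(i := l i + 1)"
        then have "l = n(i := n i - 1)" using arrival_eq_iff by blast
        then show "a i = 0" using l \<open>i \<in> _\<close> by auto
      next
        fix j i assume "j \<in> {1..J}" "i \<in> {1..J} - {j}" "0 < l j" "n = l(j := l j - 1, i := l i + 1)"
        then have "l = n(i := n i - 1, j := n j + 1)" using transfer_eq_iff[of i j l n] by auto
        then show "s j (l j) * p j i = 0" using l \<open>i \<in> _\<close> \<open>j \<in> _\<close> by auto
      next
        fix j assume "j \<in> {1..J}" "0 < l j" "n = l(j := l j - 1)"
        then have "l = n(j := n j + 1)" using departure_eq_iff by blast
        then show "s j (l j) * p j 0 = 0" using l \<open>j \<in> _\<close> by auto
      qed
    qed
  qed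
qed

lemma has_sum_shift:
  assumes sum: "(\<pi> has_sum c) (net_states J)" and j: "j \<in> {1..J}"
  shows "((\<lambda>m. if 0 < m j then \<pi> (m(j := m j - 1)) else 0) has_sum c) (net_states J)"
proof -
  let ?S = "net_states J"
  let ?h = "\<lambda>n::nat \<Rightarrow> nat. n(j := n j + 1)"
  let ?g = "\<lambda>m. if 0 < m j then \<pi> (m(j := m j - 1)) else 0"
  have "inj_on ?h ?S"
  proof (rule inj_onI)
    fix x y :: "nat \<Rightarrow> nat" assume "x(j := x j + 1) = y(j := y j + 1)"
    then have "x(j := x j + 1, j := x j) = y(j := y j + 1, j := y j)"
      by (metis add_diff_cancel_right' fun_upd_same)
    then show "x = y" by simp
  qed
  moreover have "?g (?h n) = \<pi> n" for n
  proof -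
    have "n(j := n j + 1, j := n j + 1 - 1) = n" by simp
    then show ?thesis by simp
  qed
  ultimately have "(?g has_sum c) (?h ` ?S)"
    using sum has_sum_reindex[of ?h ?S ?g] by (simp add: comp_def)
  then show ?thesis
  proof (rule has_sum_cong_neutral[THEN iffD1, rotated -1])
    fix x assume x: "x \<in> ?S - ?h ` ?S"
    show "?g x = 0"
    proof (rule ccontr)
      assume "?g x \<noteq> 0"
      then have "0 < x j" by (auto split: if_splits)
      then have "x = ?h (x(j := x j - 1))" by simp
      moreover have "x(j := x j - 1) \<in> ?S" using x j by (auto intro: net_states_upd)
      ultimately show False using x by blast
    qed
  next
    fix x assume "x \<in> ?h ` ?S - ?S"
    then show "?g x = 0" using j net_states_upd by blast
  qed simp
qed

text \<open>By local balance, \<open>\<pi> m\<close> times the service rate at \<open>j\<close> is a shifted copy of \<open>\<pi>\<close>.\<close>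
lemma net_out_flow_summable:
  fixes \<pi> :: "(nat \<Rightarrow> nat) \<Rightarrow> real"
  assumes total: "(\<pi> has_sum 1) (net_states J)"
    and local_balance: "\<And>n j. n \<in> net_states J \<Longrightarrow> j \<in> {1..J} \<Longrightarrow> 0 < n j \<Longrightarrow>
          \<pi> n * s j (n j) = \<pi> (n(j := n j - 1)) * v j"
  shows "(\<lambda>m. \<pi> m * net_out_rate J a s p m) summable_on net_states J"
proof -
  let ?S = "net_states J"
  define g where "g j m = (if 0 < m j then \<pi> (m(j := m j - 1)) else 0)" for j and m :: "nat \<Rightarrow> nat"
  have g_summable: "g j summable_on ?S" if "j \<in> {1..J}" for j
    using has_sum_shift[OF total that] unfolding g_def[abs_def] by (rule has_sum_imp_summable)
  have service_term: "\<pi> m * (if 0 < m j then s j (m j) * c else 0) = g j m * (v j * c)"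
    if "m \<in> ?S" "j \<in> {1..J}" for m j c
    using local_balance[OF that] unfolding g_def by (simp add: mult.assoc[symmetric])
  have "(\<lambda>m. \<pi> m * (\<Sum>i\<in>{1..J}. a i) + (\<Sum>j\<in>{1..J}. \<Sum>i\<in>{1..J}-{j}. g j m * (v j * p j i))
      + (\<Sum>j\<in>{1..J}. g j m * (v j * p j 0))) summable_on ?S"
    using total g_summable
    by (intro summable_on_add summable_on_sum summable_on_cmult_left finite_Diff finite_atLeastAtMost)
       (auto intro: has_sum_imp_summable)
  then show ?thesis
  proof (rule summable_on_cong[THEN iffD1, rotated])
    fix m assume "m \<in> ?S"
    then show "\<pi> m * (\<Sum>i\<in>{1..J}. a i) + (\<Sum>j\<in>{1..J}. \<Sum>i\<in>{1..J}-{j}. g j m * (v j * p j i))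
        + (\<Sum>j\<in>{1..J}. g j m * (v j * p j 0)) = \<pi> m * net_out_rate J a s p m"
      unfolding net_out_rate_def distrib_left sum_distrib_left by (simp add: service_term)
  qed
qed

lemma net_out_rate_pos:
  assumes "0 < (\<Sum>i\<in>{1..J}. a i)"
    and "\<And>j k. j \<in> {1..J} \<Longrightarrow> 1 \<le> k \<Longrightarrow> 0 \<le> s j k"
    and "\<And>j i. j \<in> {1..J} \<Longrightarrow> i \<le> J \<Longrightarrow> 0 \<le> p j i"
  shows "0 < net_out_rate J a s p m"
  unfolding net_out_rate_def
  using assms by (intro add_pos_nonneg sum_nonneg) (auto intro!: mult_nonneg_nonneg)

definition fibre :: "nat \<Rightarrow> nat set \<Rightarrow> (nat \<Rightarrow> nat) \<Rightarrow> (nat \<Rightarrow> nat) set" where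
  "fibre J B b = {n \<in> net_states J. \<forall>j\<in>B. n j = b j}"

text \<open>Nodes in \<open>B\<close> neither receive nor serve customers, so their queue lengths never change.\<close>
lemma net_rates_closed_fibre:
  assumes "\<And>j. j \<in> B \<Longrightarrow> a j = 0" and "\<And>j k. j \<in> B \<Longrightarrow> s j k = 0"
    and "\<And>i j. j \<in> B \<Longrightarrow> p i j = 0"
  shows "closed_subset (net_states J) (net_rates J a s p) (fibre J B b)"
  unfolding closed_subset_def
proof (intro conjI ballI)
  show "fibre J B b \<subseteq> net_states J" unfolding fibre_def by auto
  fix m n assume m: "m \<in> fibre J B b" and n: "n \<in> net_states J - fibre J B b"
  obtain j where j: "j \<in> B" "n j \<noteq> m j" using m n unfolding fibre_def by auto
  show "net_rates J a s p m n = 0"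
    by (rule net_rates_eq_0) (use assms j in \<open>auto split: if_splits\<close>)
qed


section \<open>Positive recurrence from a positive stationary distribution\<close>

locale positive_stationary_ctmc =
  fixes S :: "'s set" and q :: "'s \<Rightarrow> 's \<Rightarrow> real" and \<pi> :: "'s \<Rightarrow> real"
  assumes q_nonneg: "\<And>m n. m \<in> S \<Longrightarrow> n \<in> S \<Longrightarrow> 0 \<le> q m n"
    and q_summable: "\<And>m. m \<in> S \<Longrightarrow> q m summable_on (S - {m})"
    and Q_pos: "\<And>m. m \<in> S \<Longrightarrow> 0 < out_rate S q m"
    and finite_predecessors: "\<And>j. j \<in> S \<Longrightarrow> finite {l\<in>S. q l j \<noteq> 0}"
    and stationary: "stationary_dist S q \<pi>"
    and \<pi>_pos: "\<And>m. m \<in> S \<Longrightarrow> 0 < \<pi> m"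
    and flow_summable: "(\<lambda>m. \<pi> m * out_rate S q m) summable_on S"
begin

abbreviation "Q \<equiv> out_rate S q"
abbreviation "P \<equiv> jump_prob S q"

text \<open>\<open>\<nu>\<close> is an invariant measure of the jump chain. Started in \<open>i\<close>, the expected number of visits
  to \<open>j\<close> before returning to \<open>i\<close> is at most \<open>\<nu> j / \<nu> i\<close>, because that occupation measure is the
  minimal invariant measure with value \<open>1\<close> at \<open>i\<close>.\<close>
definition "\<nu> m = \<pi> m * Q m"
definition "preds j = {l\<in>S. P l j \<noteq> 0}"

lemma finite_preds: "j \<in> S \<Longrightarrow> finite (preds j)"
proof -
  assume j: "j \<in> S"
  have "preds j \<subseteq> {l\<in>S. q l j \<noteq> 0}" unfolding preds_def jump_prob_def by (auto split: if_splits)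
  then show ?thesis using finite_predecessors[OF j] finite_subset by blast
qed

lemma preds_subset: "preds j \<subseteq> S" unfolding preds_def by auto

lemma jump_prob_nonneg: "l \<in> S \<Longrightarrow> n \<in> S \<Longrightarrow> 0 \<le> P l n"
  unfolding jump_prob_def using q_nonneg Q_pos[of l] by auto

lemma rates_has_sum_out_rate: "m \<in> S \<Longrightarrow> (q m has_sum Q m) (S - {m})"
  using q_summable unfolding out_rate_def by (simp add: has_sum_infsum)

lemma jump_prob_has_sum: "l \<in> S \<Longrightarrow> (P l has_sum 1) S"
proof -
  assume l: "l \<in> S"
  have "((\<lambda>n. q l n * inverse (Q l)) has_sum (Q l * inverse (Q l))) (S - {l})"
    by (rule has_sum_cmult_left[OF rates_has_sum_out_rate[OF l]])
  then have h: "((\<lambda>n. q l n / Q l) has_sum 1) (S - {l})" using Q_pos[OF l] by (simp add: field_simps)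
  show ?thesis
    by (rule has_sum_cong_neutral[THEN iffD1, OF _ _ _ h]) (auto simp: jump_prob_def)
qed

lemma nu_nonneg: "m \<in> S \<Longrightarrow> 0 \<le> \<nu> m"
  unfolding \<nu>_def using \<pi>_pos Q_pos by (simp add: less_imp_le)

lemma nu_pos: "m \<in> S \<Longrightarrow> 0 < \<nu> m"
  unfolding \<nu>_def using \<pi>_pos Q_pos by simp

lemma nu_invariant_has_sum: "j \<in> S \<Longrightarrow> ((\<lambda>l. \<nu> l * P l j) has_sum \<nu> j) S"
proof -
  assume j: "j \<in> S"
  have h: "((\<lambda>n. \<pi> n * q n j) has_sum (\<pi> j * Q j)) (S - {j})"
    using stationary j unfolding stationary_dist_def by blast
  show ?thesis unfolding \<nu>_def
  proof (rule has_sum_cong_neutral[THEN iffD1, OF _ _ _ h])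
    fix x assume "x \<in> (S - {j}) \<inter> S"
    then show "\<pi> x * q x j = \<pi> x * Q x * P x j" using Q_pos[of x] by (auto simp: jump_prob_def)
  qed (auto simp: jump_prob_def)
qed

lemma preds_in: "l \<in> preds j \<Longrightarrow> l \<in> S" unfolding preds_def by auto

lemma has_sum_column:
  "j \<in> S \<Longrightarrow> (\<And>l. l \<in> S \<Longrightarrow> f l = g l) \<Longrightarrow>
    ((\<lambda>l. f l * P l j) has_sum (\<Sum>l\<in>preds j. g l * P l j)) S"
proof -
  assume j: "j \<in> S" and fg: "\<And>l. l \<in> S \<Longrightarrow> f l = g l"
  show ?thesis
  proof (rule has_sum_finite_neutralI[where B="preds j"])
    show "finite (preds j)" by (rule finite_preds[OF j])
    show "preds j \<subseteq> S" by (rule preds_subset)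
    show "f x * P x j = 0" if "x \<in> S - preds j" for x using that unfolding preds_def by auto
    show "(\<Sum>l\<in>preds j. g l * P l j) = (\<Sum>x\<in>preds j. f x * P x j)"
      using fg preds_in by (intro sum.cong refl) auto
  qed
qed

lemma nu_invariant: "j \<in> S \<Longrightarrow> (\<Sum>l\<in>preds j. \<nu> l * P l j) = \<nu> j"
  using has_sum_unique[OF has_sum_column[of j \<nu> \<nu>] nu_invariant_has_sum] by simp

lemma infsum_column: "j \<in> S \<Longrightarrow> infsum (\<lambda>l. f l * P l j) S = (\<Sum>l\<in>preds j. f l * P l j)"
  using has_sum_column[of j f f] by (simp add: has_sum_iff)

context
  fixes i assumes iS: "i \<in> S"
begin

abbreviation "T \<equiv> taboo_prob S q i"
definition "entry k j = (\<Sum>l\<in>preds j. T k l * P l j)"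

lemma taboo_Suc: "j \<in> S \<Longrightarrow> T (Suc k) j = (if j = i then 0 else entry k j)"
  by (simp add: infsum_column entry_def)

lemma taboo_nonneg: "j \<in> S \<Longrightarrow> 0 \<le> T k j"
proof (induction k arbitrary: j)
  case (Suc k)
  have "0 \<le> entry k j" unfolding entry_def
    using Suc preds_in jump_prob_nonneg by (intro sum_nonneg mult_nonneg_nonneg) auto
  then show ?case using taboo_Suc[OF Suc.prems] by simp
qed simp

lemma entry_nonneg: "j \<in> S \<Longrightarrow> 0 \<le> entry k j"
  unfolding entry_def using taboo_nonneg preds_in jump_prob_nonneg by (intro sum_nonneg mult_nonneg_nonneg) auto

lemma taboo_start: "T k i = (if k = 0 then 1 else 0)"
  by (cases k) (simp_all add: taboo_Suc iS)

lemma entry_0: "j \<in> S \<Longrightarrow> entry 0 j = (\<Sum>l\<in>preds j. (if l = i then 1 else 0) * P l j)"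
  unfolding entry_def by simp

lemma entry_Suc: "entry (Suc k) j = (\<Sum>l\<in>preds j. (if l = i then 0 else entry k l) * P l j)"
  unfolding entry_def[of "Suc k"]
proof (rule sum.cong[OF refl])
  fix l assume "l \<in> preds j"
  then have lS: "l \<in> S" by (rule preds_in)
  show "T (Suc k) l * P l j = (if l = i then 0 else entry k l) * P l j"
    by (simp only: taboo_Suc[OF lS])
qed

lemma entry_partial_sums_le: "j \<in> S \<Longrightarrow> \<nu> i * (\<Sum>k<K. entry k j) \<le> \<nu> j"
proof (induction K arbitrary: j)
  case 0 then show ?case using nu_nonneg by simp
next
  case (Suc K)
  have "(\<Sum>k<Suc K. entry k j) = entry 0 j + (\<Sum>k<K. entry (Suc k) j)" by (rule sum.lessThan_Suc_shift)
  also have "\<dots> = (\<Sum>l\<in>preds j. (if l = i then 1 else (\<Sum>k<K. entry k l)) * P l j)"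
  proof -
    have "(\<Sum>k<K. entry (Suc k) j) = (\<Sum>k<K. \<Sum>l\<in>preds j. (if l = i then 0 else entry k l) * P l j)"
      using entry_Suc by simp
    also have "\<dots> = (\<Sum>l\<in>preds j. \<Sum>k<K. (if l = i then 0 else entry k l) * P l j)" by (rule sum.swap)
    also have "\<dots> = (\<Sum>l\<in>preds j. (if l = i then 0 else (\<Sum>k<K. entry k l)) * P l j)"
      by (intro sum.cong refl) (simp add: sum_distrib_right)
    finally have a: "(\<Sum>k<K. entry (Suc k) j) = (\<Sum>l\<in>preds j. (if l = i then 0 else (\<Sum>k<K. entry k l)) * P l j)" .
    show ?thesis unfolding a entry_0[OF Suc.prems] sum.distrib[symmetric]
      by (intro sum.cong refl) (simp add: distrib_right[symmetric])
  qed
  finally have e: "\<nu> i * (\<Sum>k<Suc K. entry k j) = (\<Sum>l\<in>preds j. (\<nu> i * (if l = i then 1 else (\<Sum>k<K. entry k l))) * P l j)"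
    by (simp add: sum_distrib_left mult.assoc)
  also have "\<dots> \<le> (\<Sum>l\<in>preds j. \<nu> l * P l j)"
  proof (rule sum_mono)
    fix l assume l: "l \<in> preds j"
    then have lS: "l \<in> S" using preds_in by auto
    have "\<nu> i * (if l = i then 1 else (\<Sum>k<K. entry k l)) \<le> \<nu> l"
      using Suc.IH[OF lS] by auto
    then show "\<nu> i * (if l = i then 1 else (\<Sum>k<K. entry k l)) * P l j \<le> \<nu> l * P l j"
      using jump_prob_nonneg[OF lS Suc.prems] by (rule mult_right_mono)
  qed
  also have "\<dots> = \<nu> j" by (rule nu_invariant[OF Suc.prems])
  finally show ?case .
qed

lemma taboo_partial_sums_le: "j \<in> S \<Longrightarrow> (\<Sum>k<K. T k j) \<le> \<nu> j / \<nu> i"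
proof -
  assume j: "j \<in> S"
  have ni: "0 < \<nu> i" by (rule nu_pos[OF iS])
  show ?thesis
  proof (cases "j = i")
    case True
    have "(\<Sum>k<K. T k j) \<le> 1"
      unfolding True taboo_start by (cases K) (simp_all add: sum.lessThan_Suc_shift)
    then show ?thesis using True ni by simp
  next
    case False
    show ?thesis
    proof (cases K)
      case 0 then show ?thesis using nu_nonneg[OF j] ni by simp
    next
      case (Suc K')
      have "(\<Sum>k<K. T k j) = T 0 j + (\<Sum>k<K'. T (Suc k) j)" unfolding Suc by (rule sum.lessThan_Suc_shift)
      also have "\<dots> = (\<Sum>k<K'. entry k j)" using False j by (simp add: taboo_Suc del: taboo_prob.simps(2))
      also have "\<dots> \<le> \<nu> j / \<nu> i" using entry_partial_sums_le[OF j, of K'] ni by (simp add: pos_le_divide_eq mult.commute)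
      finally show ?thesis .
    qed
  qed
qed

lemma taboo_summable: "j \<in> S \<Longrightarrow> summable (\<lambda>k. T k j)"
  by (rule summableI_nonneg_bounded[where x="\<nu> j / \<nu> i"]) (auto intro: taboo_nonneg taboo_partial_sums_le)

definition "visits j = (\<Sum>k. T k j)"

lemma visits_le: "j \<in> S \<Longrightarrow> visits j \<le> \<nu> j / \<nu> i"
  unfolding visits_def by (rule suminf_le_const[OF taboo_summable]) (auto intro: taboo_partial_sums_le)

lemma visits_nonneg: "j \<in> S \<Longrightarrow> 0 \<le> visits j"
  unfolding visits_def by (rule suminf_nonneg[OF taboo_summable]) (auto intro: taboo_nonneg)

lemma visits_start: "visits i = 1"
proof -
  have "(\<lambda>k. T k i) sums 1" unfolding taboo_start using sums_single[of 0 "\<lambda>_. 1::real"] by (simp add: eq_commute)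
  then show ?thesis unfolding visits_def by (simp add: sums_iff)
qed

lemma return_partial_sums_le: "(\<Sum>k<K. entry k i) \<le> 1"
  using entry_partial_sums_le[OF iS, of K] nu_pos[OF iS] by simp

lemma return_summable: "summable (\<lambda>k. entry k i)"
  by (rule summableI_nonneg_bounded[where x=1]) (auto intro: entry_nonneg[OF iS] return_partial_sums_le)

definition "return_prob = (\<Sum>k. entry k i)"

lemma entry_sums_eq_visits: "j \<in> S \<Longrightarrow> j \<noteq> i \<Longrightarrow> (\<Sum>k. entry k j) = visits j"
proof -
  assume j: "j \<in> S" and ji: "j \<noteq> i"
  have "(\<lambda>k. entry k j) = (\<lambda>k. T (Suc k) j)" using ji j by (simp add: taboo_Suc del: taboo_prob.simps(2))
  then show ?thesis using suminf_split_head[OF taboo_summable[OF j]] ji unfolding visits_def by simp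
qed

lemma visits_step: "j \<in> S \<Longrightarrow> (\<Sum>l\<in>preds j. visits l * P l j) = (\<Sum>k. entry k j)"
proof -
  assume j: "j \<in> S"
  have "(\<Sum>l\<in>preds j. visits l * P l j) = (\<Sum>l\<in>preds j. \<Sum>k. T k l * P l j)"
    unfolding visits_def using preds_in taboo_summable by (intro sum.cong refl suminf_mult2) auto
  also have "\<dots> = (\<Sum>k. \<Sum>l\<in>preds j. T k l * P l j)"
    using preds_in taboo_summable by (intro suminf_sum[symmetric] summable_mult2) auto
  finally show ?thesis unfolding entry_def .
qed

definition "deficit l = \<nu> l / \<nu> i - visits l"

lemma deficit_nonneg: "l \<in> S \<Longrightarrow> 0 \<le> deficit l"
  unfolding deficit_def using visits_le by simp

lemma deficit_start: "deficit i = 0"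
  unfolding deficit_def visits_start using nu_pos[OF iS] by simp

lemma deficit_step: "j \<in> S \<Longrightarrow> (\<Sum>l\<in>preds j. deficit l * P l j) = (if j = i then 1 - return_prob else deficit j)"
proof -
  assume j: "j \<in> S"
  have "(\<Sum>l\<in>preds j. deficit l * P l j) = (\<Sum>l\<in>preds j. \<nu> l * P l j) / \<nu> i - (\<Sum>l\<in>preds j. visits l * P l j)"
    unfolding deficit_def by (simp add: sum_divide_distrib sum_subtractf algebra_simps)
  also have "\<dots> = \<nu> j / \<nu> i - (\<Sum>k. entry k j)" using nu_invariant[OF j] visits_step[OF j] by simp
  finally show ?thesis using entry_sums_eq_visits[OF j] nu_pos[OF iS] unfolding deficit_def return_prob_def by auto
qed

lemma deficit_summable: "deficit summable_on S"
proof (rule summable_on_comparison_test[where f="\<lambda>l. \<nu> l / \<nu> i"])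
  show "(\<lambda>l. \<nu> l / \<nu> i) summable_on S"
    using summable_on_cmult_left[OF flow_summable, of "inverse (\<nu> i)"] unfolding \<nu>_def by (simp add: divide_inverse)
qed (auto simp: deficit_def intro: visits_le visits_nonneg deficit_nonneg)

text \<open>The deficit is summable and carried to itself by the jump chain, except that at \<open>i\<close> it
  gains \<open>1 - return_prob\<close>; comparing total masses gives \<open>return_prob = 1\<close>.\<close>
lemma return_prob_eq_1: "return_prob = 1"
proof -
  define M where "M = infsum deficit S"
  have M: "(deficit has_sum M) S" unfolding M_def using deficit_summable by simp
  have row: "((\<lambda>n. case (l, n) of (l, n) \<Rightarrow> deficit l * P l n) has_sum deficit l) S" if "l \<in> S" for l
    using has_sum_cmult_right[OF jump_prob_has_sum[OF that], of "deficit l"] by simp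
  have "(\<lambda>(l, n). deficit l * P l n) summable_on S \<times> S"
  proof (rule summable_on_SigmaI[OF row deficit_summable])
    show "0 \<le> (case (l, n) of (l, n) \<Rightarrow> deficit l * P l n)" if "l \<in> S" "n \<in> S" for l n
      using deficit_nonneg[OF that(1)] jump_prob_nonneg[OF that] by simp
  qed
  then have "((\<lambda>(l, n). deficit l * P l n) has_sum M) (S \<times> S)"
    using has_sum_SigmaI[where f="\<lambda>(l, n). deficit l * P l n", OF row M] by simp
  from has_sum_swap[THEN iffD1, OF this]
  have "((\<lambda>(n, l). deficit l * P l n) has_sum M) (S \<times> S)" by simp
  then have "((\<lambda>n. if n = i then 1 - return_prob else deficit n) has_sum M) S"
  proof (rule has_sum_SigmaD)
    fix n assume n: "n \<in> S"
    show "((\<lambda>l. case (n, l) of (n, l) \<Rightarrow> deficit l * P l n) has_sum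
        (if n = i then 1 - return_prob else deficit n)) S"
      using has_sum_column[OF n, of deficit deficit] deficit_step[OF n] by simp
  qed
  moreover have "(\<lambda>n. if n = i then 1 - return_prob else deficit n)
      = (\<lambda>n. deficit n + (if n = i then 1 - return_prob else 0))"
    using deficit_start by (auto simp: fun_eq_iff)
  ultimately have "((\<lambda>n. deficit n + (if n = i then 1 - return_prob else 0)) has_sum M) S" by simp
  moreover have "((\<lambda>n. deficit n + (if n = i then 1 - return_prob else 0)) has_sum (M + (1 - return_prob))) S"
    by (rule has_sum_add[OF M has_sum_if_eq[OF iS]])
  ultimately have "M = M + (1 - return_prob)" by (rule has_sum_unique)
  then show ?thesis by simp
qed

lemma taboo_occupation_finite_sums_le:
  assumes finA: "finite A" and AS: "A \<subseteq> UNIV \<times> S"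
  shows "sum (\<lambda>(k, j). T k j / Q j) A \<le> 1 / \<nu> i"
proof -
  define K where "K = Suc (Max (insert 0 (fst ` A)))"
  have "A \<subseteq> {..<K} \<times> snd ` A"
  proof
    fix x assume x: "x \<in> A"
    have "fst x \<le> Max (insert 0 (fst ` A))" using x finA by (intro Max_ge) auto
    then show "x \<in> {..<K} \<times> snd ` A"
      using x unfolding K_def by (cases x) (auto simp: less_Suc_eq_le intro: rev_image_eqI)
  qed
  moreover have snd_A: "finite (snd ` A)" "snd ` A \<subseteq> S" using finA AS by auto
  ultimately have "sum (\<lambda>(k, j). T k j / Q j) A \<le> sum (\<lambda>(k, j). T k j / Q j) ({..<K} \<times> snd ` A)"
    using taboo_nonneg Q_pos by (intro sum_mono2) (auto intro!: divide_nonneg_pos)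
  also have "\<dots> = (\<Sum>j\<in>snd ` A. (\<Sum>k<K. T k j) / Q j)"
    by (subst sum.cartesian_product[symmetric]) (simp add: sum.swap[of _ "{..<K}"] sum_divide_distrib)
  also have "\<dots> \<le> (\<Sum>j\<in>snd ` A. \<pi> j / \<nu> i)"
  proof (rule sum_mono)
    fix j assume "j \<in> snd ` A"
    then have j: "j \<in> S" using snd_A by auto
    have "(\<Sum>k<K. T k j) / Q j \<le> (\<nu> j / \<nu> i) / Q j"
      using taboo_partial_sums_le[OF j, of K] Q_pos[OF j] by (intro divide_right_mono) auto
    also have "\<dots> = \<pi> j / \<nu> i" unfolding \<nu>_def[of j] using Q_pos[OF j] by simp
    finally show "(\<Sum>k<K. T k j) / Q j \<le> \<pi> j / \<nu> i" .
  qed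
  also have "\<dots> \<le> 1 / \<nu> i"
  proof -
    have "(\<Sum>j\<in>snd ` A. \<pi> j) \<le> 1"
      using snd_A stationary unfolding stationary_dist_def by (intro finite_sum_le_has_sum) auto
    then show ?thesis using nu_pos[OF iS] by (simp add: sum_divide_distrib[symmetric] divide_right_mono)
  qed
  finally show ?thesis .
qed

lemma taboo_occupation_summable: "(\<lambda>(k, j). T k j / Q j) summable_on UNIV \<times> S"
proof (rule nonneg_bdd_above_summable_on)
  show "0 \<le> (case x of (k, j) \<Rightarrow> T k j / Q j)" if "x \<in> UNIV \<times> S" for x
    using that taboo_nonneg Q_pos by (auto intro!: divide_nonneg_pos)
  show "bdd_above (sum (\<lambda>(k, j). T k j / Q j) ` {A. A \<subseteq> UNIV \<times> S \<and> finite A})"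
    using taboo_occupation_finite_sums_le by (intro bdd_aboveI2) auto
qed

lemma pos_recurrent: "pos_recurrent_state S q i"
  unfolding pos_recurrent_state_def
proof
  have "(\<lambda>k. \<Sum>\<^sub>\<infinity>l\<in>S. T k l * P l i) = (\<lambda>k. entry k i)"
    using infsum_column[OF iS] unfolding entry_def by simp
  moreover have "(\<lambda>k. entry k i) sums 1"
    using summable_sums[OF return_summable] return_prob_eq_1 unfolding return_prob_def by simp
  ultimately show "((\<lambda>k. \<Sum>\<^sub>\<infinity>l\<in>S. T k l * P l i) has_sum 1) UNIV"
    using entry_nonneg[OF iS] by (simp add: sums_nonneg_imp_has_sum)
  show "(\<lambda>(k, j). T k j / Q j) summable_on UNIV \<times> S" by (rule taboo_occupation_summable)
qed

end

end

lemma closed_subset_not_irreducible: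
  assumes "closed_subset S q A" "m \<in> A" "n \<in> S - A"
  shows "\<not> irreducible_ctmc S q"
proof
  let ?R = "{(a, b). a \<in> S \<and> b \<in> S \<and> a \<noteq> b \<and> 0 < q a b}"
  assume "irreducible_ctmc S q"
  then have "(m, n) \<in> ?R\<^sup>*" using assms unfolding irreducible_ctmc_def closed_subset_def by blast
  moreover have "y \<in> A" if "(x, y) \<in> ?R\<^sup>*" "x \<in> A" for x y
    using that
  proof (induction rule: rtrancl_induct)
    case (step y z)
    show "z \<in> A"
    proof (rule ccontr)
      assume "z \<notin> A"
      then have "q y z = 0" using step assms(1) unfolding closed_subset_def by blast
      then show False using step by simp
    qed
  qed
  ultimately show False using assms by blast
qed


section \<open>Irreducibility of connected networks\<close>

locale connected_network =
  fixes J :: nat and a :: "nat \<Rightarrow> real" and s :: "nat \<Rightarrow> nat \<Rightarrow> real" and p :: "nat \<Rightarrow> nat \<Rightarrow> real"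
  assumes a_nonneg: "\<And>i. i \<in> {1..J} \<Longrightarrow> 0 \<le> a i"
    and s_pos: "\<And>j k. j \<in> {1..J} \<Longrightarrow> 1 \<le> k \<Longrightarrow> 0 < s j k"
    and p_nonneg: "\<And>j i. j \<in> {1..J} \<Longrightarrow> i \<le> J \<Longrightarrow> 0 \<le> p j i"
    and a_pos: "\<And>y. y \<in> {1..J} \<Longrightarrow> 0 < p 0 y \<Longrightarrow> 0 < a y"
    and connected: "\<And>x y. x \<le> J \<Longrightarrow> y \<le> J \<Longrightarrow>
      (x, y) \<in> {(x, y). x \<le> J \<and> y \<le> J \<and> x \<noteq> y \<and> 0 < p x y}\<^sup>*"
begin

abbreviation "states \<equiv> net_states J"
abbreviation "rates \<equiv> net_rates J a s p"
abbreviation "moves \<equiv> {(a, b). a \<in> states \<and> b \<in> states \<and> a \<noteq> b \<and> 0 < rates a b}"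
abbreviation "route \<equiv> {(x, y). x \<le> J \<and> y \<le> J \<and> x \<noteq> y \<and> 0 < p x y}"
abbreviation "inner_route \<equiv> {(x, y). x \<le> J \<and> y \<le> J \<and> x \<noteq> y \<and> 0 < p x y \<and> x \<noteq> 0}"

lemma s_nonneg: "j \<in> {1..J} \<Longrightarrow> 1 \<le> k \<Longrightarrow> 0 \<le> s j k"
  using s_pos by (simp add: less_imp_le)

lemma arrival_rates_le: "(\<Sum>i\<in>{1..J}. if n' = n(i := n i + 1) then a i else 0) \<le> rates n n'"
proof -
  have "0 \<le> (\<Sum>j\<in>{1..J}. \<Sum>i\<in>{1..J} - {j}.
        if 0 < n j \<and> n' = n(j := n j - 1, i := n i + 1) then s j (n j) * p j i else 0)"
    using s_pos p_nonneg by (intro sum_nonneg) (auto intro!: mult_nonneg_nonneg simp: s_nonneg)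
  moreover have "0 \<le> (\<Sum>j\<in>{1..J}. if 0 < n j \<and> n' = n(j := n j - 1) then s j (n j) * p j 0 else 0)"
    using s_pos p_nonneg by (intro sum_nonneg) (auto intro!: mult_nonneg_nonneg simp: s_nonneg)
  ultimately show ?thesis unfolding net_rates_def by linarith
qed

lemma transfer_rates_le: "(\<Sum>j\<in>{1..J}. \<Sum>i\<in>{1..J} - {j}.
        if 0 < n j \<and> n' = n(j := n j - 1, i := n i + 1) then s j (n j) * p j i else 0) \<le> rates n n'"
proof -
  have "0 \<le> (\<Sum>i\<in>{1..J}. if n' = n(i := n i + 1) then a i else 0)"
    using a_nonneg by (intro sum_nonneg) auto
  moreover have "0 \<le> (\<Sum>j\<in>{1..J}. if 0 < n j \<and> n' = n(j := n j - 1) then s j (n j) * p j 0 else 0)"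
    using s_pos p_nonneg by (intro sum_nonneg) (auto intro!: mult_nonneg_nonneg simp: s_nonneg)
  ultimately show ?thesis unfolding net_rates_def by linarith
qed

lemma departure_rates_le: "(\<Sum>j\<in>{1..J}. if 0 < n j \<and> n' = n(j := n j - 1) then s j (n j) * p j 0 else 0) \<le> rates n n'"
proof -
  have "0 \<le> (\<Sum>i\<in>{1..J}. if n' = n(i := n i + 1) then a i else 0)"
    using a_nonneg by (intro sum_nonneg) auto
  moreover have "0 \<le> (\<Sum>j\<in>{1..J}. \<Sum>i\<in>{1..J} - {j}.
        if 0 < n j \<and> n' = n(j := n j - 1, i := n i + 1) then s j (n j) * p j i else 0)"
    using s_pos p_nonneg by (intro sum_nonneg) (auto intro!: mult_nonneg_nonneg simp: s_nonneg)
  ultimately show ?thesis unfolding net_rates_def by linarith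
qed

lemma transfer_step:
  assumes n: "n \<in> states" and x: "x \<in> {1..J}" and nx: "0 < n x" and y: "y \<in> {1..J}" and xy: "y \<noteq> x" and pxy: "0 < p x y"
  shows "(n, n(x := n x - 1, y := n y + 1)) \<in> moves"
proof -
  let ?n' = "n(x := n x - 1, y := n y + 1)"
  have t: "(\<Sum>i\<in>{1..J} - {x}. if 0 < n x \<and> ?n' = n(x := n x - 1, i := n i + 1) then s x (n x) * p x i else 0)
     \<le> (\<Sum>j\<in>{1..J}. \<Sum>i\<in>{1..J} - {j}.
        if 0 < n j \<and> ?n' = n(j := n j - 1, i := n i + 1) then s j (n j) * p j i else 0)"
    using x s_pos p_nonneg by (intro member_le_sum sum_nonneg) (auto intro!: mult_nonneg_nonneg simp: s_nonneg)
  have "s x (n x) * p x y \<le> (\<Sum>i\<in>{1..J} - {x}. if 0 < n x \<and> ?n' = n(x := n x - 1, i := n i + 1) then s x (n x) * p x i else 0)"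
  proof -
    have "s x (n x) * p x y = (if 0 < n x \<and> ?n' = n(x := n x - 1, y := n y + 1) then s x (n x) * p x y else 0)"
      using nx by simp
    also have "\<dots> \<le> (\<Sum>i\<in>{1..J} - {x}. if 0 < n x \<and> ?n' = n(x := n x - 1, i := n i + 1) then s x (n x) * p x i else 0)"
      using y xy x s_pos p_nonneg by (intro member_le_sum) (auto intro!: mult_nonneg_nonneg simp: s_nonneg)
    finally show ?thesis .
  qed
  moreover have "0 < s x (n x) * p x y" using s_pos[OF x, of "n x"] nx pxy by simp
  ultimately have "0 < rates n ?n'" using t transfer_rates_le[of n ?n'] by linarith
  moreover have "?n' \<in> states" using n x y by (simp add: net_states_upd)
  moreover have "n \<noteq> ?n'" using xy by (auto simp: fun_eq_iff dest: fun_cong[where x=y])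
  ultimately show ?thesis using n by simp
qed

lemma departure_step:
  assumes n: "n \<in> states" and x: "x \<in> {1..J}" and nx: "0 < n x" and px: "0 < p x 0"
  shows "(n, n(x := n x - 1)) \<in> moves"
proof -
  let ?n' = "n(x := n x - 1)"
  have "s x (n x) * p x 0 = (if 0 < n x \<and> ?n' = n(x := n x - 1) then s x (n x) * p x 0 else 0)"
    using nx by simp
  also have "\<dots> \<le> (\<Sum>j\<in>{1..J}. if 0 < n j \<and> ?n' = n(j := n j - 1) then s j (n j) * p j 0 else 0)"
    using x s_pos p_nonneg by (intro member_le_sum) (auto intro!: mult_nonneg_nonneg simp: s_nonneg)
  also have "\<dots> \<le> rates n ?n'" by (rule departure_rates_le)
  finally have le: "s x (n x) * p x 0 \<le> rates n ?n'" .
  moreover have "0 < s x (n x) * p x 0" using s_pos[OF x, of "n x"] nx px by simp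
  ultimately have "0 < rates n ?n'" by linarith
  moreover have "?n' \<in> states" using n x by (simp add: net_states_upd)
  moreover have "n \<noteq> ?n'" using nx by (auto simp: fun_eq_iff dest: fun_cong[where x=x])
  ultimately show ?thesis using n by simp
qed

lemma arrival_step:
  assumes n: "n \<in> states" and y: "y \<in> {1..J}" and ay: "0 < a y"
  shows "(n, n(y := n y + 1)) \<in> moves"
proof -
  let ?n' = "n(y := n y + 1)"
  have "a y = (if ?n' = n(y := n y + 1) then a y else 0)" by simp
  also have "\<dots> \<le> (\<Sum>i\<in>{1..J}. if ?n' = n(i := n i + 1) then a i else 0)"
    using y a_nonneg by (intro member_le_sum) auto
  also have "\<dots> \<le> rates n ?n'" by (rule arrival_rates_le)
  finally have "a y \<le> rates n ?n'" .
  then have "0 < rates n ?n'" using ay by linarith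
  moreover have "?n' \<in> states" using n y by (simp add: net_states_upd)
  moreover have "n \<noteq> ?n'" by (auto simp: fun_eq_iff dest: fun_cong[where x=y])
  ultimately show ?thesis using n by simp
qed

lemma route_to_exit: "(x, y) \<in> route\<^sup>* \<Longrightarrow> (x, 0) \<in> inner_route\<^sup>* \<or> (x, y) \<in> inner_route\<^sup>*"
proof (induction rule: rtrancl_induct)
  case base then show ?case by simp
next
  case (step y z)
  then show ?case
  proof (elim disjE)
    assume "(x, 0) \<in> inner_route\<^sup>*" then show ?thesis by simp
  next
    assume h: "(x, y) \<in> inner_route\<^sup>*"
    show ?thesis
    proof (cases "y = 0")
      case True then show ?thesis using h by simp
    next
      case False
      then have "(y, z) \<in> inner_route" using step(2) by simp
      then show ?thesis using h by (meson rtrancl.rtrancl_into_rtrancl)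
    qed
  qed
qed

lemma route_from_source: "(0, y) \<in> route\<^sup>* \<Longrightarrow> y = 0 \<or> (\<exists>c. (0, c) \<in> route \<and> (c, y) \<in> inner_route\<^sup>*)"
proof (induction rule: rtrancl_induct)
  case base then show ?case by simp
next
  case (step y z)
  show ?case
  proof (cases "y = 0")
    case True
    then show ?thesis using step(2) by blast
  next
    case False
    then obtain c where c: "(0, c) \<in> route" "(c, y) \<in> inner_route\<^sup>*" using step(3) by blast
    have "(y, z) \<in> inner_route" using step(2) False by simp
    then show ?thesis using c by (meson rtrancl.rtrancl_into_rtrancl)
  qed
qed

text \<open>Node \<open>0\<close> is the outside world: adding a customer there leaves the state unchanged.\<close>
definition add_customer :: "(nat \<Rightarrow> nat) \<Rightarrow> nat \<Rightarrow> (nat \<Rightarrow> nat)" where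
  "add_customer n y = (if y = 0 then n else n(y := n y + 1))"

lemma route_moves_customer:
  assumes "(x, y) \<in> inner_route\<^sup>*" and x: "x \<in> {1..J}" and n: "n \<in> states" and nx: "0 < n x"
  shows "(n, add_customer (n(x := n x - 1)) y) \<in> moves\<^sup>*"
  using assms(1)
proof (induction rule: rtrancl_induct)
  case base
  have e: "add_customer (n(x := n x - 1)) x = n" using x nx by (auto simp: add_customer_def fun_eq_iff)
  show ?case unfolding e by (rule rtrancl.rtrancl_refl)
next
  case (step z w)
  let ?d = "n(x := n x - 1)"
  have d: "?d \<in> states" using n x by (simp add: net_states_upd)
  have z: "z \<in> {1..J}" and w: "w \<le> J" and zw: "z \<noteq> w" and pzw: "0 < p z w" using step(2) by auto
  let ?n' = "?d(z := ?d z + 1)"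
  have n'eq: "add_customer ?d z = ?n'" using z by (simp add: add_customer_def)
  have n'_state: "?n' \<in> states" using d z by (simp add: net_states_upd)
  have n'z: "0 < ?n' z" by simp
  have e: "(?n', add_customer ?d w) \<in> moves"
  proof (cases "w = 0")
    case True
    have "(?n', ?n'(z := ?n' z - 1)) \<in> moves" by (rule departure_step[OF n'_state z n'z]) (use pzw True in simp)
    moreover have "?n'(z := ?n' z - 1) = add_customer ?d w" using True by (auto simp: add_customer_def fun_eq_iff)
    ultimately show ?thesis by simp
  next
    case False
    then have w1: "w \<in> {1..J}" using w by simp
    have "(?n', ?n'(z := ?n' z - 1, w := ?n' w + 1)) \<in> moves"
      by (rule transfer_step[OF n'_state z n'z w1]) (use zw pzw in auto)
    moreover have "?n'(z := ?n' z - 1, w := ?n' w + 1) = add_customer ?d w"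
      using False zw by (auto simp: add_customer_def fun_eq_iff)
    ultimately show ?thesis by simp
  qed
  have "(n, ?n') \<in> moves\<^sup>*" unfolding n'eq[symmetric] by (rule step(3))
  then show ?case by (rule rtrancl_into_rtrancl[OF _ e])
qed

abbreviation "empty_state \<equiv> (\<lambda>_::nat. 0::nat)"

lemma nonempty_node: "n \<in> states \<Longrightarrow> n \<noteq> empty_state \<Longrightarrow> \<exists>x\<in>{1..J}. 0 < n x"
proof -
  assume n: "n \<in> states" and nz: "n \<noteq> empty_state"
  then obtain x where x: "n x \<noteq> 0" by (auto simp: fun_eq_iff)
  then have "x \<in> {1..J}" using n unfolding net_states_def by auto
  then show ?thesis using x by auto
qed

lemma remove_customer_decreases:
  fixes n :: "nat \<Rightarrow> nat"
  assumes x: "x \<in> {1..J}" and nx: "0 < n x"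
  shows "(\<Sum>j\<in>{1..J}. (n(x := n x - 1)) j) < (\<Sum>j\<in>{1..J}. n j)"
proof -
  have "(\<Sum>j\<in>{1..J}. (n(x := n x - 1)) j) = (n x - 1) + (\<Sum>j\<in>{1..J}-{x}. n j)"
    using x by (simp add: sum.remove)
  also have "\<dots> < n x + (\<Sum>j\<in>{1..J}-{x}. n j)" using nx by (cases "n x") auto
  also have "\<dots> = (\<Sum>j\<in>{1..J}. n j)" using x by (simp add: sum.remove)
  finally show ?thesis .
qed

lemma reaches_empty_state: "n \<in> states \<Longrightarrow> (n, empty_state) \<in> moves\<^sup>*"
proof (induction "\<Sum>j\<in>{1..J}. n j" arbitrary: n rule: less_induct)
  case less
  show ?case
  proof (cases "n = empty_state")
    case True then show ?thesis by simp
  next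
    case False
    then obtain x where x: "x \<in> {1..J}" "0 < n x" using nonempty_node less.prems by blast
    have "(x, 0) \<in> route\<^sup>*" using connected[of x 0] x by simp
    then have "(x, 0) \<in> inner_route\<^sup>*" using route_to_exit by blast
    then have "(n, add_customer (n(x := n x - 1)) 0) \<in> moves\<^sup>*" by (rule route_moves_customer[OF _ x(1) less.prems x(2)])
    then have "(n, n(x := n x - 1)) \<in> moves\<^sup>*" by (simp add: add_customer_def)
    moreover have "(n(x := n x - 1), empty_state) \<in> moves\<^sup>*"
      by (rule less.hyps[OF remove_customer_decreases[where n=n, OF x]]) (rule net_states_upd[OF less.prems x(1)])
    ultimately show ?thesis by (rule rtrancl_trans)
  qed
qed

lemma reached_from_empty_state: "n \<in> states \<Longrightarrow> (empty_state, n) \<in> moves\<^sup>*"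
proof (induction "\<Sum>j\<in>{1..J}. n j" arbitrary: n rule: less_induct)
  case less
  show ?case
  proof (cases "n = empty_state")
    case True then show ?thesis by simp
  next
    case False
    then obtain x where x: "x \<in> {1..J}" "0 < n x" using nonempty_node less.prems by blast
    let ?n0 = "n(x := n x - 1)"
    have n0_state: "?n0 \<in> states" using less.prems x(1) by (simp add: net_states_upd)
    have to_n0: "(empty_state, ?n0) \<in> moves\<^sup>*"
      by (rule less.hyps[OF remove_customer_decreases[where n=n, OF x] n0_state])
    have "(0, x) \<in> route\<^sup>*" using connected[of 0 x] x by simp
    then have "x = 0 \<or> (\<exists>c. (0, c) \<in> route \<and> (c, x) \<in> inner_route\<^sup>*)" by (rule route_from_source)
    then obtain c where c: "(0, c) \<in> route" "(c, x) \<in> inner_route\<^sup>*" using x(1) by auto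
    have c1: "c \<in> {1..J}" and pc: "0 < p 0 c" using c(1) by auto
    let ?n1 = "?n0(c := ?n0 c + 1)"
    have arrival: "(?n0, ?n1) \<in> moves" by (rule arrival_step[OF n0_state c1 a_pos[OF c1 pc]])
    have n1_state: "?n1 \<in> states" using n0_state c1 by (simp add: net_states_upd)
    have "(?n1, add_customer (?n1(c := ?n1 c - 1)) x) \<in> moves\<^sup>*" by (rule route_moves_customer[OF c(2) c1 n1_state]) simp
    moreover have "add_customer (?n1(c := ?n1 c - 1)) x = n"
    proof -
      have "?n1(c := ?n1 c - 1) = ?n0" by (auto simp: fun_eq_iff)
      moreover have "add_customer ?n0 x = n" using x by (auto simp: add_customer_def)
      ultimately show ?thesis by simp
    qed
    ultimately have "(?n1, n) \<in> moves\<^sup>*" by simp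
    then show ?thesis using rtrancl_into_rtrancl[OF to_n0 arrival] by (rule rtrancl_trans[rotated])
  qed
qed

lemma irreducible: "irreducible_ctmc states rates"
  unfolding irreducible_ctmc_def
proof (intro ballI)
  fix m n assume "m \<in> states" "n \<in> states"
  then show "(m, n) \<in> moves\<^sup>*" using rtrancl_trans[OF reaches_empty_state reached_from_empty_state] by blast
qed

end

section \<open>Routing with randomized skipping\<close>

locale routing =
  fixes J :: nat and r :: "nat \<Rightarrow> nat \<Rightarrow> real"
  assumes r_nonneg: "\<And>i j. i \<le> J \<Longrightarrow> j \<le> J \<Longrightarrow> 0 \<le> r i j"
    and r_stoch: "\<And>i. i \<le> J \<Longrightarrow> (\<Sum>j\<le>J. r i j) = 1"
    and r_irred: "\<And>i j. i \<le> J \<Longrightarrow> j \<le> J \<Longrightarrow> (i, j) \<in> {(a, b). a \<le> J \<and> b \<le> J \<and> 0 < r a b}\<^sup>+"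
begin

abbreviation "routes \<equiv> {(a, b). a \<le> J \<and> b \<le> J \<and> 0 < r a b}"
lemma routes_closed_set:
  assumes closed: "\<And>i j. i \<in> K \<Longrightarrow> j \<le> J \<Longrightarrow> 0 < r i j \<Longrightarrow> j \<in> K"
    and "i \<in> K" "i \<le> J" "j \<le> J"
  shows "j \<in> K"
  using r_irred[OF assms(3,4)] assms(2)
proof (induction rule: trancl_induct)
  case (base y)
  then show ?case using closed by blast
next
  case (step y z)
  then show ?case using closed by blast
qed

lemma traffic_negative_rows:
  assumes eta: "\<And>j. j \<le> J \<Longrightarrow> \<eta> j = (\<Sum>i\<le>J. \<eta> i * r i j)"
    and K: "K = {j. j \<le> J \<and> \<eta> j < 0}" and i: "i \<in> K"
  shows "(\<Sum>j\<in>K. r i j) = 1"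
proof -
  define c where "c i = (\<Sum>j\<in>K. r i j)" for i
  have KJ: "K \<subseteq> {..J}" unfolding K by auto
  have c_le: "c i \<le> 1" if "i \<le> J" for i
  proof -
    have "c i \<le> (\<Sum>j\<le>J. r i j)" unfolding c_def using KJ r_nonneg[OF that] by (intro sum_mono2) auto
    then show ?thesis using r_stoch[OF that] by simp
  qed
  have "(\<Sum>j\<in>K. \<eta> j) = (\<Sum>j\<in>K. \<Sum>i\<le>J. \<eta> i * r i j)"
    using KJ eta by (intro sum.cong) auto
  also have "\<dots> = (\<Sum>i\<le>J. \<eta> i * c i)" unfolding c_def sum_distrib_left by (rule sum.swap)
  also have "\<dots> = (\<Sum>i\<in>K. \<eta> i * c i) + (\<Sum>i\<in>{..J}-K. \<eta> i * c i)"
    using sum.subset_diff[OF KJ, of "\<lambda>i. \<eta> i * c i"] by (simp add: add.commute)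
  also have "(\<Sum>i\<in>{..J}-K. \<eta> i * c i) \<ge> 0"
    unfolding K c_def using r_nonneg by (intro sum_nonneg mult_nonneg_nonneg) (auto simp: not_less)
  ultimately have "0 \<le> (\<Sum>i\<in>K. \<eta> i * (1 - c i))" by (simp add: algebra_simps sum_subtractf)
  moreover have nonpos: "\<eta> i * (1 - c i) \<le> 0" if "i \<in> K" for i
    using that c_le unfolding K by (simp add: mult_nonpos_nonneg)
  ultimately have "(\<Sum>i\<in>K. - (\<eta> i * (1 - c i))) = 0"
    using sum_nonpos[of K "\<lambda>i. \<eta> i * (1 - c i)"] by (simp add: sum_negf)
  moreover have "finite K" using KJ finite_subset by blast
  ultimately have "- (\<eta> i * (1 - c i)) = 0"
    using sum_nonneg_eq_0_iff[of K "\<lambda>i. - (\<eta> i * (1 - c i))"] nonpos i by auto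
  then show ?thesis using i unfolding K c_def by auto
qed

lemma traffic_nonneg:
  assumes eta: "\<And>j. j \<le> J \<Longrightarrow> \<eta> j = (\<Sum>i\<le>J. \<eta> i * r i j)" and eta0: "0 < \<eta> 0" and j: "j \<le> J"
  shows "0 \<le> \<eta> j"
proof (rule ccontr)
  define K where "K = {j. j \<le> J \<and> \<eta> j < 0}"
  assume "\<not> 0 \<le> \<eta> j"
  then have jK: "j \<in> K" using j unfolding K_def by simp
  have closed: "k \<in> K" if i: "i \<in> K" and k: "k \<le> J" "0 < r i k" for i k
  proof (rule ccontr)
    assume "k \<notin> K"
    have "(\<Sum>l\<le>J. r i l) = (\<Sum>l\<in>K. r i l) + (\<Sum>l\<in>{..J}-K. r i l)"
      using sum.subset_diff[of K "{..J}" "r i"] unfolding K_def by (auto simp: add.commute)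
    moreover have "r i k \<le> (\<Sum>l\<in>{..J}-K. r i l)"
      using i k \<open>k \<notin> K\<close> r_nonneg unfolding K_def by (intro member_le_sum) auto
    ultimately show False
      using r_stoch[of i] traffic_negative_rows[OF eta K_def i] i k unfolding K_def by simp
  qed
  have "0 \<in> K" using routes_closed_set[where K=K and i=j and j=0, OF closed jK j] by simp
  then show False using eta0 unfolding K_def by simp
qed

lemma traffic_pos:
  assumes eta: "\<And>j. j \<le> J \<Longrightarrow> \<eta> j = (\<Sum>i\<le>J. \<eta> i * r i j)" and eta0: "0 < \<eta> 0" and j: "j \<le> J"
  shows "0 < \<eta> j"
proof -
  have "k \<in> {j. j \<le> J \<and> 0 < \<eta> j}" if "i \<in> {j. j \<le> J \<and> 0 < \<eta> j}" "k \<le> J" "0 < r i k" for i k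
  proof -
    have "\<eta> i * r i k \<le> (\<Sum>l\<le>J. \<eta> l * r l k)"
      using that traffic_nonneg[OF eta eta0] r_nonneg by (intro member_le_sum mult_nonneg_nonneg) auto
    moreover have "0 < \<eta> i * r i k" using that by simp
    ultimately have "0 < \<eta> k" using eta[OF that(2)] by linarith
    then show ?thesis using that(2) by simp
  qed
  then show ?thesis using routes_closed_set[of "{j. j \<le> J \<and> 0 < \<eta> j}" 0 j] eta0 j by simp
qed

end

locale skipping = routing +
  fixes \<alpha> :: "nat \<Rightarrow> real"
  assumes \<alpha>_range: "\<And>j. j \<le> J \<Longrightarrow> 0 \<le> \<alpha> j \<and> \<alpha> j \<le> 1"
    and \<alpha>0: "\<alpha> 0 = 1"
begin

text \<open>At a negative minimum \<open>m\<close> of \<open>v\<close>, the defining inequality exhibits \<open>m\<close> as a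
  sub-average of values \<open>\<ge> m\<close> and of the rejected mass, which carries weight \<open>-m > 0\<close>.\<close>
lemma skip_superharmonic_min_step:
  assumes v: "\<And>i. i \<le> J \<Longrightarrow> (\<Sum>k\<le>J. r i k * (1 - \<alpha> k) * v k) \<le> v i"
    and m_le: "\<And>k. k \<le> J \<Longrightarrow> m \<le> v k" and m_neg: "m < 0"
    and i: "i \<le> J" "v i = m" and k: "k \<le> J" "0 < r i k"
  shows "\<alpha> k = 0 \<and> v k = m"
proof -
  let ?t = "\<lambda>k. r i k * ((1 - \<alpha> k) * (v k - m) + \<alpha> k * (- m))"
  have t_nonneg: "0 \<le> ?t k" if "k \<le> J" for k
    using r_nonneg[OF i(1) that] \<alpha>_range[OF that] m_le[OF that] m_neg
    by (intro mult_nonneg_nonneg add_nonneg_nonneg) auto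
  have "(\<Sum>k\<le>J. ?t k) = (\<Sum>k\<le>J. r i k * (1 - \<alpha> k) * v k) - m * (\<Sum>k\<le>J. r i k)"
    by (simp add: sum_distrib_left sum_subtractf[symmetric] algebra_simps)
  also have "\<dots> \<le> 0" using v[OF i(1)] r_stoch[OF i(1)] i(2) by simp
  finally have "?t k = 0"
    using sum_nonneg_eq_0_iff[of "{..J}" ?t] t_nonneg k(1) sum_nonneg[of "{..J}" ?t] by force
  then have z: "(1 - \<alpha> k) * (v k - m) + \<alpha> k * (- m) = 0" using k(2) by simp
  have "0 \<le> (1 - \<alpha> k) * (v k - m)" and "0 \<le> \<alpha> k * (- m)"
    using \<alpha>_range[OF k(1)] m_le[OF k(1)] m_neg by (auto intro: mult_nonneg_nonpos)
  then have "\<alpha> k = 0" using z m_neg by (simp add: add_nonneg_eq_0_iff)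
  then show ?thesis using z by simp
qed

lemma skip_min_principle:
  assumes v: "\<And>i. i \<le> J \<Longrightarrow> (\<Sum>k\<le>J. r i k * (1 - \<alpha> k) * v k) \<le> v i" and i: "i \<le> J"
  shows "0 \<le> v i"
proof (rule ccontr)
  define m where "m = Min (v ` {..J})"
  have m_le: "m \<le> v k" if "k \<le> J" for k unfolding m_def using that by (intro Min_le) auto
  have "m \<in> v ` {..J}" unfolding m_def by (intro Min_in) auto
  then obtain i0 where i0: "i0 \<le> J" "v i0 = m" by auto
  assume "\<not> 0 \<le> v i"
  then have m_neg: "m < 0" using m_le[OF i] by simp
  let ?K = "{k. k \<le> J \<and> v k = m}"
  have all_min: "k \<in> ?K" if "k \<le> J" for k
  proof (rule routes_closed_set[where K="?K" and i=i0 and j=k])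
    show "l \<in> ?K" if "i \<in> ?K" "l \<le> J" "0 < r i l" for i l
      using skip_superharmonic_min_step[OF v m_le m_neg _ _ that(2,3)] that(1,2) by simp
  qed (use i0 that in auto)
  obtain y where "(y, 0) \<in> routes" using r_irred[of 0 0] by (auto dest: tranclD2)
  then have "y \<le> J" "v y = m" "0 < r y 0" using all_min by auto
  then have "\<alpha> 0 = 0" using skip_superharmonic_min_step[OF v m_le m_neg] by simp
  then show False using \<alpha>0 by simp
qed

lemma skip_harmonic_eq_0:
  assumes v: "\<And>i. i \<le> J \<Longrightarrow> v i - (\<Sum>k\<le>J. r i k * (1 - \<alpha> k) * v k) = 0"
  shows "\<And>i. i \<le> J \<Longrightarrow> v i = 0"
proof -
  fix i assume i: "i \<le> J"
  have "0 \<le> v i"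
  proof (rule skip_min_principle[OF _ i])
    fix i assume "i \<le> J"
    then show "(\<Sum>k\<le>J. r i k * (1 - \<alpha> k) * v k) \<le> v i" using v[of i] by simp
  qed
  moreover have "0 \<le> - v i"
  proof (rule skip_min_principle[of "\<lambda>i. - v i", OF _ i])
    fix i assume "i \<le> J"
    then show "(\<Sum>k\<le>J. r i k * (1 - \<alpha> k) * - v k) \<le> - v i"
      using v[of i] by (simp add: sum_negf)
  qed
  ultimately show "v i = 0" by simp
qed

text \<open>\<open>skip_approx t i j\<close> is the probability that the skipping walk from \<open>i\<close> is accepted at \<open>j\<close>
  within \<open>t\<close> proposals; these probabilities increase to a solution of the defining equation.\<close>
primrec skip_approx :: "nat \<Rightarrow> nat \<Rightarrow> nat \<Rightarrow> real" where
  "skip_approx 0 i j = 0"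
| "skip_approx (Suc t) i j = r i j * \<alpha> j + (\<Sum>k\<le>J. r i k * (1 - \<alpha> k) * skip_approx t k j)"

lemma skip_approx_nonneg: "i \<le> J \<Longrightarrow> j \<le> J \<Longrightarrow> 0 \<le> skip_approx t i j"
proof (induction t arbitrary: i)
  case (Suc t)
  then show ?case using r_nonneg \<alpha>_range
    by (auto intro!: add_nonneg_nonneg sum_nonneg mult_nonneg_nonneg)
qed simp

lemma skip_approx_mono: "i \<le> J \<Longrightarrow> j \<le> J \<Longrightarrow> skip_approx t i j \<le> skip_approx (Suc t) i j"
proof (induction t arbitrary: i)
  case 0
  then show ?case using skip_approx_nonneg[of i j "Suc 0"] by simp
next
  case (Suc t)
  have "(\<Sum>k\<le>J. r i k * (1 - \<alpha> k) * skip_approx t k j) \<le> (\<Sum>k\<le>J. r i k * (1 - \<alpha> k) * skip_approx (Suc t) k j)"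
  proof (rule sum_mono)
    fix k assume "k \<in> {..J}"
    then show "r i k * (1 - \<alpha> k) * skip_approx t k j \<le> r i k * (1 - \<alpha> k) * skip_approx (Suc t) k j"
      using Suc r_nonneg[of i k] \<alpha>_range[of k] by (intro mult_left_mono) auto
  qed
  then show ?case by simp
qed

lemma skip_approx_row_sum_le: "i \<le> J \<Longrightarrow> (\<Sum>j\<le>J. skip_approx t i j) \<le> 1"
proof (induction t arbitrary: i)
  case (Suc t)
  have "(\<Sum>j\<le>J. skip_approx (Suc t) i j) = (\<Sum>j\<le>J. r i j * \<alpha> j) + (\<Sum>k\<le>J. r i k * (1 - \<alpha> k) * (\<Sum>j\<le>J. skip_approx t k j))"
    by (simp add: sum.distrib sum_distrib_left) (rule sum.swap)
  also have "\<dots> \<le> (\<Sum>j\<le>J. r i j * \<alpha> j) + (\<Sum>k\<le>J. r i k * (1 - \<alpha> k))"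
  proof (intro add_left_mono sum_mono)
    fix k assume "k \<in> {..J}"
    then show "r i k * (1 - \<alpha> k) * (\<Sum>j\<le>J. skip_approx t k j) \<le> r i k * (1 - \<alpha> k)"
      using Suc r_nonneg[of i k] \<alpha>_range[of k] by (intro mult_left_le) auto
  qed
  also have "\<dots> = (\<Sum>j\<le>J. r i j)" by (simp add: sum.distrib[symmetric] algebra_simps)
  also have "\<dots> = 1" using r_stoch Suc by simp
  finally show ?case .
qed simp

lemma skip_approx_le_1: "i \<le> J \<Longrightarrow> j \<le> J \<Longrightarrow> skip_approx t i j \<le> 1"
proof -
  assume i: "i \<le> J" and j: "j \<le> J"
  have "skip_approx t i j \<le> (\<Sum>j\<le>J. skip_approx t i j)"
    using j skip_approx_nonneg[OF i] by (intro member_le_sum) auto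
  then show ?thesis using skip_approx_row_sum_le[OF i, of t] by simp
qed

definition skip_limit where "skip_limit i j = lim (\<lambda>t. skip_approx t i j)"

lemma skip_approx_tendsto: "i \<le> J \<Longrightarrow> j \<le> J \<Longrightarrow> (\<lambda>t. skip_approx t i j) \<longlonglongrightarrow> skip_limit i j"
proof -
  assume i: "i \<le> J" and j: "j \<le> J"
  have "incseq (\<lambda>t. skip_approx t i j)" using skip_approx_mono[OF i j] by (simp add: incseq_Suc_iff)
  then obtain L where "(\<lambda>t. skip_approx t i j) \<longlonglongrightarrow> L" using incseq_convergent[of _ 1] skip_approx_le_1[OF i j] by blast
  then show ?thesis unfolding skip_limit_def by (simp add: limI)
qed

lemma skip_limit_equation:
  "i \<le> J \<Longrightarrow> j \<le> J \<Longrightarrow>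
    skip_limit i j - (\<Sum>k\<le>J. r i k * (1 - \<alpha> k) * skip_limit k j) = r i j * \<alpha> j"
proof -
  assume i: "i \<le> J" and j: "j \<le> J"
  have "(\<lambda>t. skip_approx (Suc t) i j) \<longlonglongrightarrow> skip_limit i j" using LIMSEQ_Suc[OF skip_approx_tendsto[OF i j]] .
  moreover have "(\<lambda>t. skip_approx (Suc t) i j) \<longlonglongrightarrow> r i j * \<alpha> j + (\<Sum>k\<le>J. r i k * (1 - \<alpha> k) * skip_limit k j)"
    unfolding skip_approx.simps using skip_approx_tendsto j by (intro tendsto_intros) auto
  ultimately show ?thesis using LIMSEQ_unique by fastforce
qed

definition skip_solution where "skip_solution i j = (if i \<le> J \<and> j \<le> J then skip_limit i j else 0)"

definition skip_solves :: "(nat \<Rightarrow> nat \<Rightarrow> real) \<Rightarrow> bool" where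
  "skip_solves X \<longleftrightarrow> (\<forall>i j. J < i \<or> J < j \<longrightarrow> X i j = 0) \<and>
     (\<forall>i\<le>J. \<forall>j\<le>J. X i j - (\<Sum>k\<le>J. r i k * (1 - \<alpha> k) * X k j) = r i j * \<alpha> j)"

lemma skip_solves_solution: "skip_solves skip_solution"
  unfolding skip_solves_def
proof (intro conjI allI impI)
  fix i j assume "J < i \<or> J < j"
  then show "skip_solution i j = 0" unfolding skip_solution_def by auto
next
  fix i j assume i: "i \<le> J" and j: "j \<le> J"
  have "(\<Sum>k\<le>J. r i k * (1 - \<alpha> k) * skip_solution k j) = (\<Sum>k\<le>J. r i k * (1 - \<alpha> k) * skip_limit k j)"
    using j by (intro sum.cong refl) (auto simp: skip_solution_def)
  then show "skip_solution i j - (\<Sum>k\<le>J. r i k * (1 - \<alpha> k) * skip_solution k j) = r i j * \<alpha> j"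
    using skip_limit_equation[OF i j] i j by (simp add: skip_solution_def)
qed

lemma skip_solves_unique:
  assumes X: "skip_solves X" and Y: "skip_solves Y"
  shows "X = Y"
proof (intro ext)
  fix i j
  show "X i j = Y i j"
  proof (cases "i \<le> J \<and> j \<le> J")
    case True
    have "X l j - Y l j - (\<Sum>k\<le>J. r l k * (1 - \<alpha> k) * (X k j - Y k j)) = 0" if "l \<le> J" for l
    proof -
      have "X l j - (\<Sum>k\<le>J. r l k * (1 - \<alpha> k) * X k j) = r l j * \<alpha> j"
        and "Y l j - (\<Sum>k\<le>J. r l k * (1 - \<alpha> k) * Y k j) = r l j * \<alpha> j"
        using X Y that True unfolding skip_solves_def by auto
      moreover have "(\<Sum>k\<le>J. r l k * (1 - \<alpha> k) * (X k j - Y k j))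
          = (\<Sum>k\<le>J. r l k * (1 - \<alpha> k) * X k j) - (\<Sum>k\<le>J. r l k * (1 - \<alpha> k) * Y k j)"
        by (simp add: right_diff_distrib sum_subtractf)
      ultimately show ?thesis by linarith
    qed
    then have "X i j - Y i j = 0" using True by (intro skip_harmonic_eq_0[of "\<lambda>l. X l j - Y l j"]) auto
    then show ?thesis by simp
  next
    case False
    then show ?thesis using X Y unfolding skip_solves_def by auto
  qed
qed

lemma skip_matrix_eq_solution: "skip_matrix J r \<alpha> = skip_solution"
  unfolding skip_matrix_def skip_solves_def[symmetric]
  by (rule the_equality[where P=skip_solves, OF skip_solves_solution])
    (rule skip_solves_unique[OF _ skip_solves_solution])

abbreviation "sk \<equiv> skip_matrix J r \<alpha>"

lemma skip_matrix_equation: "i \<le> J \<Longrightarrow> j \<le> J \<Longrightarrow> sk i j - (\<Sum>k\<le>J. r i k * (1 - \<alpha> k) * sk k j) = r i j * \<alpha> j"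
  unfolding skip_matrix_eq_solution skip_solution_def using skip_limit_equation by (auto intro!: sum.cong)

lemma skip_matrix_outside: "J < i \<or> J < j \<Longrightarrow> sk i j = 0"
  unfolding skip_matrix_eq_solution skip_solution_def by auto

lemma skip_matrix_nonneg: "i \<le> J \<Longrightarrow> j \<le> J \<Longrightarrow> 0 \<le> sk i j"
proof -
  assume i: "i \<le> J" and j: "j \<le> J"
  show ?thesis
  proof (rule skip_min_principle[of "\<lambda>i. sk i j", OF _ i])
    fix i assume i: "i \<le> J"
    show "(\<Sum>k\<le>J. r i k * (1 - \<alpha> k) * sk k j) \<le> sk i j"
    proof -
      have "0 \<le> r i j * \<alpha> j" using r_nonneg[OF i j] \<alpha>_range[OF j] by simp
      then show ?thesis using skip_matrix_equation[OF i j] by simp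
    qed
  qed
qed

lemma skip_matrix_ge: "i \<le> J \<Longrightarrow> j \<le> J \<Longrightarrow> r i j * \<alpha> j \<le> sk i j"
proof -
  assume i: "i \<le> J" and j: "j \<le> J"
  have "0 \<le> (\<Sum>k\<le>J. r i k * (1 - \<alpha> k) * sk k j)"
    using r_nonneg[OF i] \<alpha>_range skip_matrix_nonneg[OF _ j] by (intro sum_nonneg mult_nonneg_nonneg) auto
  then show ?thesis using skip_matrix_equation[OF i j] by simp
qed

lemma skip_matrix_zero_column: "j \<le> J \<Longrightarrow> \<alpha> j = 0 \<Longrightarrow> sk i j = 0"
proof (cases "i \<le> J")
  case True
  assume j: "j \<le> J" and a: "\<alpha> j = 0"
  show ?thesis
    by (rule skip_harmonic_eq_0[of "\<lambda>i. sk i j", OF _ True]) (use skip_matrix_equation j a in simp)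
qed (simp add: skip_matrix_outside)

lemma skip_matrix_row_sum: "i \<le> J \<Longrightarrow> (\<Sum>j\<le>J. sk i j) = 1"
proof -
  assume i: "i \<le> J"
  have "(\<Sum>j\<le>J. sk i j) - 1 = 0"
  proof (rule skip_harmonic_eq_0[of "\<lambda>i. (\<Sum>j\<le>J. sk i j) - 1", OF _ i])
    fix i assume i: "i \<le> J"
    have e0: "(\<Sum>k\<le>J. r i k * (1 - \<alpha> k) * (\<Sum>j\<le>J. sk k j)) = (\<Sum>j\<le>J. \<Sum>k\<le>J. r i k * (1 - \<alpha> k) * sk k j)"
      by (simp only: sum_distrib_left) (rule sum.swap)
    have e1: "(\<Sum>k\<le>J. r i k * (1 - \<alpha> k) * ((\<Sum>j\<le>J. sk k j) - 1))
      = (\<Sum>j\<le>J. \<Sum>k\<le>J. r i k * (1 - \<alpha> k) * sk k j) - (\<Sum>k\<le>J. r i k * (1 - \<alpha> k))"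
      unfolding e0[symmetric] by (simp add: right_diff_distrib sum_subtractf)
    have "(\<Sum>j\<le>J. \<Sum>k\<le>J. r i k * (1 - \<alpha> k) * sk k j) = (\<Sum>j\<le>J. sk i j - r i j * \<alpha> j)"
    proof (rule sum.cong[OF refl])
      fix j assume "j \<in> {..J}"
      then show "(\<Sum>k\<le>J. r i k * (1 - \<alpha> k) * sk k j) = sk i j - r i j * \<alpha> j" using skip_matrix_equation[OF i, of j] by simp
    qed
    then have e2: "(\<Sum>j\<le>J. \<Sum>k\<le>J. r i k * (1 - \<alpha> k) * sk k j) = (\<Sum>j\<le>J. sk i j) - (\<Sum>j\<le>J. r i j * \<alpha> j)"
      by (simp add: sum_subtractf)
    have e3: "(\<Sum>k\<le>J. r i k * (1 - \<alpha> k)) + (\<Sum>j\<le>J. r i j * \<alpha> j) = 1"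
      using r_stoch[OF i] by (simp add: sum.distrib[symmetric] algebra_simps)
    show "(\<Sum>j\<le>J. sk i j) - 1 - (\<Sum>k\<le>J. r i k * (1 - \<alpha> k) * ((\<Sum>j\<le>J. sk k j) - 1)) = 0"
      unfolding e1 e2 using e3 by simp
  qed
  then show ?thesis by simp
qed

lemma skip_matrix_traffic:
  assumes eta: "\<And>j. j \<le> J \<Longrightarrow> \<eta> j = (\<Sum>i\<le>J. \<eta> i * r i j)"
    and j: "j \<le> J"
  shows "(\<Sum>i\<le>J. \<eta> i * \<alpha> i * sk i j) = \<eta> j * \<alpha> j"
proof -
  have "(\<Sum>i\<le>J. \<eta> i * (1 - \<alpha> i) * sk i j) = (\<Sum>i\<le>J. (\<Sum>l\<le>J. \<eta> l * r l i) * (1 - \<alpha> i) * sk i j)"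
  proof (rule sum.cong[OF refl])
    fix i assume "i \<in> {..J}"
    then show "\<eta> i * (1 - \<alpha> i) * sk i j = (\<Sum>l\<le>J. \<eta> l * r l i) * (1 - \<alpha> i) * sk i j"
      using eta[of i] by simp
  qed
  also have "\<dots> = (\<Sum>l\<le>J. \<eta> l * (\<Sum>i\<le>J. r l i * (1 - \<alpha> i) * sk i j))"
    by (simp add: sum_distrib_left sum_distrib_right algebra_simps) (rule sum.swap)
  also have "\<dots> = (\<Sum>l\<le>J. \<eta> l * (sk l j - r l j * \<alpha> j))"
  proof (intro sum.cong refl)
    fix l assume "l \<in> {..J}"
    then show "\<eta> l * (\<Sum>i\<le>J. r l i * (1 - \<alpha> i) * sk i j) = \<eta> l * (sk l j - r l j * \<alpha> j)"
      using skip_matrix_equation[of l j] j by simp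
  qed
  finally have A: "(\<Sum>i\<le>J. \<eta> i * (1 - \<alpha> i) * sk i j) = (\<Sum>l\<le>J. \<eta> l * sk l j) - \<alpha> j * (\<Sum>l\<le>J. \<eta> l * r l j)"
    by (simp add: algebra_simps sum_subtractf sum_distrib_left)
  have "(\<Sum>i\<le>J. \<eta> i * \<alpha> i * sk i j) = (\<Sum>i\<le>J. \<eta> i * sk i j) - (\<Sum>i\<le>J. \<eta> i * (1 - \<alpha> i) * sk i j)"
    by (simp add: sum_subtractf[symmetric] algebra_simps)
  also have "\<dots> = \<alpha> j * (\<Sum>l\<le>J. \<eta> l * r l j)" unfolding A by simp
  also have "\<dots> = \<eta> j * \<alpha> j" using eta[OF j] by simp
  finally show ?thesis .
qed

lemma skip_matrix_connected:
  assumes \<alpha>_pos: "\<And>j. j \<le> J \<Longrightarrow> 0 < \<alpha> j" and x: "x \<le> J" and y: "y \<le> J"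
  shows "(x, y) \<in> {(x, y). x \<le> J \<and> y \<le> J \<and> x \<noteq> y \<and> 0 < sk x y}\<^sup>*"
proof -
  let ?E = "{(x, y). x \<le> J \<and> y \<le> J \<and> x \<noteq> y \<and> 0 < sk x y}"
  have edge: "(u, w) \<in> ?E\<^sup>*" if "(u, w) \<in> routes" for u w
  proof (cases "u = w")
    case False
    have "0 < r u w * \<alpha> w" using that \<alpha>_pos by simp
    also have "\<dots> \<le> sk u w" using that by (intro skip_matrix_ge) auto
    finally show ?thesis using False that by (intro r_into_rtrancl) auto
  qed simp
  from r_irred[OF x y] show ?thesis
  proof (induction rule: trancl_induct)
    case (base w)
    then show ?case by (rule edge)
  next
    case (step w v)
    then show ?case using edge[of w v] by (meson rtrancl_trans)
  qed
qed

end

section \<open>Product-form stationary distributions\<close>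

locale summable_node =
  fixes \<eta> :: "nat \<Rightarrow> real" and \<mu> :: "nat \<Rightarrow> nat \<Rightarrow> real" and j :: nat
  assumes \<eta>_pos: "0 < \<eta> j" and \<mu>_pos: "\<And>k. 1 \<le> k \<Longrightarrow> 0 < \<mu> j k"
    and summable: "summable (\<lambda>m. \<Prod>k\<in>{1..m}. \<eta> j / \<mu> j k)"
begin

abbreviation "weight m \<equiv> (\<Prod>k\<in>{1..m}. \<eta> j / \<mu> j k)"

lemma weight_pos: "0 < weight m"
  using \<eta>_pos \<mu>_pos by (intro prod_pos) auto

lemma norm_const_pos: "0 < norm_const \<eta> \<mu> j"
proof -
  have "sum weight {0} \<le> (\<Sum>m. weight m)"
    by (rule sum_le_suminf[OF summable]) (use weight_pos in \<open>auto intro: less_imp_le\<close>)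
  then show ?thesis unfolding norm_const_def by simp
qed

lemma node_factor_pos: "0 < node_factor \<eta> \<mu> j m"
  unfolding node_factor_def using weight_pos norm_const_pos by simp

lemma node_factor_has_sum: "(node_factor \<eta> \<mu> j has_sum 1) UNIV"
proof -
  have "(\<lambda>m. weight m / norm_const \<eta> \<mu> j) sums (norm_const \<eta> \<mu> j / norm_const \<eta> \<mu> j)"
    unfolding norm_const_def by (intro sums_divide summable_sums summable)
  then have "node_factor \<eta> \<mu> j sums 1" using norm_const_pos unfolding node_factor_def by simp
  then show ?thesis by (rule sums_nonneg_imp_has_sum) (auto intro: less_imp_le[OF node_factor_pos])
qed

lemma node_factor_balance:
  "0 < m \<Longrightarrow> node_factor \<eta> \<mu> j m * \<mu> j m = node_factor \<eta> \<mu> j (m - 1) * \<eta> j"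
proof -
  assume "0 < m"
  then obtain n where m: "m = Suc n" by (cases m) auto
  have "weight (Suc n) = \<eta> j / \<mu> j (Suc n) * weight n" by (rule prod.nat_ivl_Suc') simp
  then have "weight (Suc n) * \<mu> j (Suc n) = weight n * \<eta> j"
    using \<mu>_pos[of "Suc n"] by (simp add: field_simps)
  then have "weight (Suc n) / norm_const \<eta> \<mu> j * \<mu> j (Suc n) = weight n / norm_const \<eta> \<mu> j * \<eta> j"
    by (metis times_divide_eq_left mult.commute)
  then show ?thesis unfolding m node_factor_def by simp
qed

end

lemma fibres_cover:
  assumes "B \<subseteq> {1..J}"
  shows "(\<Union>b\<in>configurations B. fibre J B b) = net_states J"
proof
  show "(\<Union>b\<in>configurations B. fibre J B b) \<subseteq> net_states J" unfolding fibre_def by auto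
  show "net_states J \<subseteq> (\<Union>b\<in>configurations B. fibre J B b)"
  proof
    fix n assume "n \<in> net_states J"
    then have "n \<in> fibre J B (\<lambda>j. if j \<in> B then n j else 0)" unfolding fibre_def by auto
    moreover have "(\<lambda>j. if j \<in> B then n j else 0) \<in> configurations B" unfolding configurations_def by auto
    ultimately show "n \<in> (\<Union>b\<in>configurations B. fibre J B b)" by blast
  qed
qed

lemma fibres_disjoint:
  assumes "b \<in> configurations B" "b' \<in> configurations B" "b \<noteq> b'"
  shows "fibre J B b \<inter> fibre J B b' = {}"
proof -
  obtain j where j: "b j \<noteq> b' j" using assms(3) by (auto simp: fun_eq_iff)
  have "j \<in> B"
  proof (rule ccontr)
    assume "j \<notin> B"
    then show False using assms(1,2) j unfolding configurations_def by auto
  qed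
  then show ?thesis using j unfolding fibre_def by auto
qed

lemma infinite_fibres:
  assumes "B \<subseteq> {1..J}" "B \<noteq> {}"
  shows "infinite (fibre J B ` configurations B)"
proof
  assume fin: "finite (fibre J B ` configurations B)"
  have "inj_on (fibre J B) (configurations B)"
  proof (rule inj_onI)
    fix b b' assume b: "b \<in> configurations B" and b': "b' \<in> configurations B" and eq: "fibre J B b = fibre J B b'"
    have "b \<in> fibre J B b" using b assms(1) unfolding fibre_def configurations_def net_states_def by auto
    then have "\<forall>j\<in>B. b j = b' j" using eq unfolding fibre_def by auto
    then show "b = b'" using b b' unfolding configurations_def by (auto simp: fun_eq_iff)
  qed
  with fin have "finite (configurations B)" by (rule finite_imageD)
  obtain j0 where j0: "j0 \<in> B" using assms(2) by auto
  have "range (\<lambda>t::nat. (\<lambda>j::nat. if j = j0 then t else 0)) \<subseteq> configurations B"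
    using j0 unfolding configurations_def by auto
  moreover have "inj (\<lambda>t::nat. (\<lambda>j::nat. if j = j0 then t else 0))"
    by (rule injI) (metis (mono_tags))
  ultimately have "finite (UNIV :: nat set)"
    using \<open>finite (configurations B)\<close> by (meson finite_imageD finite_subset)
  then show False by simp
qed

lemma product_form_local_balance:
  fixes J :: nat and B :: "nat set" and f :: "nat \<Rightarrow> nat \<Rightarrow> real" and \<phi> :: "(nat \<Rightarrow> nat) \<Rightarrow> real"
  defines "\<pi> \<equiv> \<lambda>n. (\<Prod>j\<in>{1..J} - B. f j (n j)) * \<phi> (\<lambda>j. if j \<in> B then n j else 0)"
  assumes f_balance: "\<And>j m. j \<in> {1..J} - B \<Longrightarrow> 0 < m \<Longrightarrow> f j m * s j m = f j (m - 1) * v j"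
    and frozen_s: "\<And>j k. j \<in> B \<Longrightarrow> s j k = 0" and frozen_v: "\<And>j. j \<in> B \<Longrightarrow> v j = 0"
    and j: "j \<in> {1..J}" and n_j: "0 < n j"
  shows "\<pi> n * s j (n j) = \<pi> (n(j := n j - 1)) * v j"
proof (cases "j \<in> B")
  case True
  then show ?thesis using frozen_s frozen_v by simp
next
  case False
  let ?W = "{1..J} - B"
  have jW: "j \<in> ?W" using False j by simp
  have "(\<lambda>i. if i \<in> B then (n(j := n j - 1)) i else 0) = (\<lambda>i. if i \<in> B then n i else 0)"
    using False by (auto simp: fun_eq_iff)
  moreover have "(\<Prod>i\<in>?W. f i (n i)) = f j (n j) * (\<Prod>i\<in>?W - {j}. f i (n i))"
    and "(\<Prod>i\<in>?W. f i ((n(j := n j - 1)) i)) = f j (n j - 1) * (\<Prod>i\<in>?W - {j}. f i (n i))"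
    using jW by (simp_all add: prod.remove)
  ultimately show ?thesis using f_balance[OF jW n_j] unfolding \<pi>_def by (simp add: algebra_simps)
qed

lemma net_rates_stationary_product_form:
  fixes f :: "nat \<Rightarrow> nat \<Rightarrow> real" and \<phi> :: "(nat \<Rightarrow> nat) \<Rightarrow> real"
  assumes B: "B \<subseteq> {1..J}"
    and f_sum: "\<And>j. j \<in> {1..J} - B \<Longrightarrow> (f j has_sum 1) UNIV"
    and f_nonneg: "\<And>j k. j \<in> {1..J} - B \<Longrightarrow> 0 \<le> f j k"
    and f_balance: "\<And>j m. j \<in> {1..J} - B \<Longrightarrow> 0 < m \<Longrightarrow> f j m * s j m = f j (m - 1) * v j"
    and frozen_s: "\<And>j k. j \<in> B \<Longrightarrow> s j k = 0" and frozen_v: "\<And>j. j \<in> B \<Longrightarrow> v j = 0"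
    and \<phi>_sum: "(\<phi> has_sum 1) (configurations B)"
    and \<phi>_nonneg: "\<And>b. b \<in> configurations B \<Longrightarrow> 0 \<le> \<phi> b"
    and traffic: "\<And>i. i \<in> {1..J} \<Longrightarrow> v i = a i + (\<Sum>j\<in>{1..J}. v j * p j i)"
    and rows: "\<And>j. j \<in> {1..J} \<Longrightarrow> (\<Sum>i\<le>J. p j i) = 1"
  shows "stationary_dist (net_states J) (net_rates J a s p)
           (\<lambda>n. (\<Prod>j\<in>{1..J} - B. f j (n j)) * \<phi> (\<lambda>j. if j \<in> B then n j else 0))"
proof (rule net_rates_stationary[OF _ _ _ traffic rows])
  let ?W = "{1..J} - B"
  let ?\<pi> = "\<lambda>n. (\<Prod>j\<in>?W. f j (n j)) * \<phi> (\<lambda>j. if j \<in> B then n j else 0)"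
  show "0 \<le> ?\<pi> n" for n
    using f_nonneg \<phi>_nonneg[of "\<lambda>j. if j \<in> B then n j else 0"]
    by (intro mult_nonneg_nonneg prod_nonneg) (auto simp: configurations_def)
  have "?W \<union> B = {1..J}" "?W \<inter> B = {}" using B by auto
  then show "(?\<pi> has_sum 1) (net_states J)"
    using has_sum_product_form[of ?W B f \<phi> 1] f_sum f_nonneg \<phi>_sum \<phi>_nonneg
    by (simp add: net_states_eq_configurations)
  show "?\<pi> n * s j (n j) = ?\<pi> (n(j := n j - 1)) * v j" if "j \<in> {1..J}" "0 < n j" for n j
    using product_form_local_balance[where J=J and B=B and f=f and s=s and v=v and \<phi>=\<phi> and n=n and j=j,
        OF f_balance frozen_s frozen_v that]
    by simp
qed


section \<open>Jackson networks with randomized skipping\<close>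

text \<open>In the notation of the paper, \<open>X\<close> is \<open>r\<^sup>\<alpha>\<close>, \<open>q\<close> are the rates of \<open>X\<^sup>\<gamma>\<close> and \<open>frozen\<close> is
  \<open>B(\<gamma>)\<close>; the external arrival rate \<open>\<lambda>\<close> appears as \<open>\<eta> 0\<close>.\<close>
locale jackson_skipping = routing J r
  for J :: nat and r :: "nat \<Rightarrow> nat \<Rightarrow> real" +
  fixes \<mu> :: "nat \<Rightarrow> nat \<Rightarrow> real" and \<eta> :: "nat \<Rightarrow> real" and \<gamma> :: "nat \<Rightarrow> real"
  assumes r_00: "r 0 0 = 0"
    and traffic: "\<And>j. j \<le> J \<Longrightarrow> \<eta> j = (\<Sum>i\<le>J. \<eta> i * r i j)"
    and \<eta>0_pos: "0 < \<eta> 0"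
    and \<mu>_pos: "\<And>j k. j \<in> {1..J} \<Longrightarrow> 1 \<le> k \<Longrightarrow> 0 < \<mu> j k"
    and summable: "\<And>j. j \<in> {1..J} \<Longrightarrow> summable (\<lambda>m. \<Prod>k\<in>{1..m}. \<eta> j / \<mu> j k)"
    and \<gamma>_range: "\<And>j. j \<in> {1..J} \<Longrightarrow> 0 \<le> \<gamma> j \<and> \<gamma> j \<le> 1"
begin

abbreviation "\<alpha> \<equiv> \<lambda>j. if j = 0 then 1 else \<gamma> j"
abbreviation "X \<equiv> skip_matrix J r \<alpha>"
abbreviation "arrival \<equiv> \<lambda>i. \<eta> 0 * X 0 i"
abbreviation "service \<equiv> \<lambda>j k. \<gamma> j * \<mu> j k"
abbreviation "q \<equiv> net_rates J arrival service X"
abbreviation "frozen \<equiv> {j\<in>{1..J}. \<gamma> j = 0}"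

sublocale skipping J r \<alpha>
  by unfold_locales (use \<gamma>_range in auto)

lemma node_summable: "j \<in> {1..J} \<Longrightarrow> summable_node \<eta> \<mu> j"
  by unfold_locales (use traffic_pos[OF traffic \<eta>0_pos] \<mu>_pos summable in auto)

lemma X_nonneg: "0 \<le> X i j"
  by (cases "i \<le> J \<and> j \<le> J") (auto simp: skip_matrix_nonneg skip_matrix_outside)

lemma throughput_traffic:
  "i \<in> {1..J} \<Longrightarrow> \<eta> i * \<gamma> i = arrival i + (\<Sum>j\<in>{1..J}. \<eta> j * \<gamma> j * X j i)"
  using skip_matrix_traffic[OF traffic, of i] by (simp add: sum_atMost_zero_plus)

lemma product_form_stationary:
  fixes B :: "nat set" and \<phi> :: "(nat \<Rightarrow> nat) \<Rightarrow> real"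
  assumes B: "B \<subseteq> frozen"
    and \<phi>_sum: "(\<phi> has_sum 1) (configurations B)"
    and \<phi>_nonneg: "\<And>b. b \<in> configurations B \<Longrightarrow> 0 \<le> \<phi> b"
  shows "stationary_dist (net_states J) q
    (\<lambda>n. (\<Prod>j\<in>{1..J} - B. node_factor \<eta> \<mu> j (n j)) * \<phi> (\<lambda>j. if j \<in> B then n j else 0))"
proof (rule net_rates_stationary_product_form[OF _ _ _ _ _ _ \<phi>_sum \<phi>_nonneg throughput_traffic])
  show "B \<subseteq> {1..J}" using B by auto
  show "(node_factor \<eta> \<mu> j has_sum 1) UNIV" if "j \<in> {1..J} - B" for j
    using that by (intro summable_node.node_factor_has_sum node_summable) auto
  show "0 \<le> node_factor \<eta> \<mu> j k" if "j \<in> {1..J} - B" for j k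
    using that by (intro less_imp_le summable_node.node_factor_pos node_summable) auto
  show "node_factor \<eta> \<mu> j m * service j m = node_factor \<eta> \<mu> j (m - 1) * (\<eta> j * \<gamma> j)"
    if "j \<in> {1..J} - B" "0 < m" for j m
  proof -
    have "node_factor \<eta> \<mu> j m * \<mu> j m = node_factor \<eta> \<mu> j (m - 1) * \<eta> j"
      using that by (intro summable_node.node_factor_balance node_summable) auto
    then have "\<gamma> j * (node_factor \<eta> \<mu> j m * \<mu> j m) = \<gamma> j * (node_factor \<eta> \<mu> j (m - 1) * \<eta> j)"
      by simp
    then show ?thesis by (simp add: mult_ac)
  qed
  show "service j k = 0" "\<eta> j * \<gamma> j = 0" if "j \<in> B" for j k
    using that B by auto
  show "(\<Sum>i\<le>J. X j i) = 1" if "j \<in> {1..J}" for j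
    using that skip_matrix_row_sum by simp
qed

abbreviation "\<xi> \<equiv> \<lambda>n. \<Prod>j\<in>{1..J}. node_factor \<eta> \<mu> j (n j)"

lemma \<xi>_stationary: "stationary_dist (net_states J) q \<xi>"
  using product_form_stationary[of "{}" "\<lambda>_. 1"] by (simp add: configurations_empty has_sum_finite_iff)

lemma \<xi>_local_balance:
  "j \<in> {1..J} \<Longrightarrow> 0 < n j \<Longrightarrow> \<xi> n * service j (n j) = \<xi> (n(j := n j - 1)) * (\<eta> j * \<gamma> j)"
  using product_form_local_balance[where B="{}" and \<phi>="\<lambda>_. 1" and f="node_factor \<eta> \<mu>"
      and s=service and v="\<lambda>j. \<eta> j * \<gamma> j"]
    summable_node.node_factor_balance[OF node_summable]
  by (simp add: mult_ac)

lemma q_closed_fibre: "closed_subset (net_states J) q (fibre J frozen b)"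
  by (rule net_rates_closed_fibre) (auto simp: skip_matrix_zero_column)

lemma q_not_irreducible:
  assumes "frozen \<noteq> {}"
  shows "\<not> irreducible_ctmc (net_states J) q"
proof -
  obtain j where j: "j \<in> frozen" using assms by auto
  have "(\<lambda>_. 0) \<in> fibre J frozen (\<lambda>_. 0)" "(\<lambda>_. 0)(j := 1) \<in> net_states J - fibre J frozen (\<lambda>_. 0)"
    using j by (auto simp: fibre_def net_states_def)
  then show ?thesis by (rule closed_subset_not_irreducible[OF q_closed_fibre])
qed

lemma arrival_nonneg: "0 \<le> arrival i"
  using \<eta>0_pos X_nonneg by simp

context
  assumes no_frozen: "frozen = {}"
begin

lemma \<alpha>_pos: "j \<le> J \<Longrightarrow> 0 < \<alpha> j"
  using no_frozen \<gamma>_range[of j] by force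

lemma arrival_total_pos: "0 < (\<Sum>i\<in>{1..J}. arrival i)"
proof -
  have "\<exists>y\<in>{1..J}. 0 < r 0 y"
  proof (rule ccontr)
    assume "\<not> (\<exists>y\<in>{1..J}. 0 < r 0 y)"
    then have "(\<Sum>y\<in>{1..J}. r 0 y) \<le> 0" by (intro sum_nonpos) (auto simp: not_less)
    then show False using r_stoch[of 0] r_00 by (simp add: sum_atMost_zero_plus)
  qed
  then obtain y where y: "y \<in> {1..J}" "0 < r 0 y" by blast
  have "0 < r 0 y * \<alpha> y" using y \<alpha>_pos[of y] by simp
  also have "\<dots> \<le> X 0 y" using y by (intro skip_matrix_ge) auto
  finally have "0 < arrival y" using \<eta>0_pos by simp
  also have "\<dots> \<le> (\<Sum>i\<in>{1..J}. arrival i)" using y arrival_nonneg by (intro member_le_sum) auto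
  finally show ?thesis .
qed

lemma service_pos: "j \<in> {1..J} \<Longrightarrow> 1 \<le> k \<Longrightarrow> 0 < service j k"
  using \<alpha>_pos[of j] \<mu>_pos[of j k] by simp

lemma q_irreducible: "irreducible_ctmc (net_states J) q"
proof -
  interpret connected_network J arrival service X
  proof
    show "0 < arrival y" if "y \<in> {1..J}" "0 < X 0 y" for y
      using that \<eta>0_pos by simp
    show "(x, y) \<in> {(x, y). x \<le> J \<and> y \<le> J \<and> x \<noteq> y \<and> 0 < X x y}\<^sup>*" if "x \<le> J" "y \<le> J" for x y
      using skip_matrix_connected \<alpha>_pos that by blast
    show "0 \<le> arrival i" for i by (rule arrival_nonneg)
    show "0 < service j k" if "j \<in> {1..J}" "1 \<le> k" for j k using that by (rule service_pos)
    show "0 \<le> X j i" for j i by (rule X_nonneg)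
  qed
  show ?thesis by (rule irreducible)
qed

lemma q_pos_recurrent:
  assumes "i \<in> net_states J"
  shows "pos_recurrent_state (net_states J) q i"
proof -
  interpret positive_stationary_ctmc "net_states J" q \<xi>
  proof
    show "0 \<le> q m n" for m n
      using arrival_nonneg service_pos X_nonneg by (intro net_rates_nonneg) (auto intro: less_imp_le)
    show "q m summable_on net_states J - {m}" if "m \<in> net_states J" for m
      using net_rates_has_sum_out_rate[OF that] by (rule has_sum_imp_summable)
    show "0 < out_rate (net_states J) q m" if "m \<in> net_states J" for m
      unfolding out_rate_net_rates[OF that] using arrival_total_pos service_pos X_nonneg
      by (intro net_out_rate_pos) (auto intro: less_imp_le)
    show "finite {l \<in> net_states J. q l n \<noteq> 0}" for n
      by (rule finite_subset[OF _ finite_net_rates_predecessors]) auto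
    show "stationary_dist (net_states J) q \<xi>" by (rule \<xi>_stationary)
    show "0 < \<xi> m" for m
      using node_summable summable_node.node_factor_pos by (intro prod_pos) blast
    have "(\<xi> has_sum 1) (net_states J)" using \<xi>_stationary unfolding stationary_dist_def by blast
    then have "(\<lambda>m. \<xi> m * net_out_rate J arrival service X m) summable_on net_states J"
      using \<xi>_local_balance by (intro net_out_flow_summable) blast
    then show "(\<lambda>m. \<xi> m * out_rate (net_states J) q m) summable_on net_states J"
      by (rule summable_on_cong[THEN iffD1, rotated]) (simp add: out_rate_net_rates)
  qed
  show ?thesis using assms by (rule pos_recurrent)
qed

lemma q_ergodic: "ergodic_ctmc (net_states J) q"
  unfolding ergodic_ctmc_def using q_irreducible q_pos_recurrent by blast

end

end


theorem theorem3p2: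
  fixes J :: nat
    and lam :: "nat \<Rightarrow> real"          \<comment> \<open>external arrival rates lambda_j, j = 1..J\<close>
    and \<mu> :: "nat \<Rightarrow> nat \<Rightarrow> real"       \<comment> \<open>service intensities mu_j(k)\<close>
    and r :: "nat \<Rightarrow> nat \<Rightarrow> real"       \<comment> \<open>extended routing matrix on {0..J}\<close>
    and \<eta> :: "nat \<Rightarrow> real"              \<comment> \<open>extended traffic solution\<close>
    and \<gamma> :: "nat \<Rightarrow> real"
  defines "\<Lambda> \<equiv> (\<Sum>j\<in>{1..J}. lam j)"
  assumes lam_nonneg: "\<forall>j\<in>{1..J}. 0 \<le> lam j"
    and lam_pos: "0 < \<Lambda>"
    and mu_pos: "\<forall>j\<in>{1..J}. \<forall>k\<ge>1. 0 < \<mu> j k"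
    and r_nonneg: "\<forall>i\<le>J. \<forall>j\<le>J. 0 \<le> r i j"
    and r_stoch: "\<forall>i\<le>J. (\<Sum>j\<le>J. r i j) = 1"
    and r_irred: "\<forall>i\<le>J. \<forall>j\<le>J. (i, j) \<in> {(a, b). a \<le> J \<and> b \<le> J \<and> 0 < r a b}\<^sup>+"
    and r_0: "\<forall>j\<in>{1..J}. r 0 j = lam j / \<Lambda>"
    and r_00: "r 0 0 = 0"
    and eta_0: "\<eta> 0 = \<Lambda>"
    and eta_traffic: "\<forall>j\<le>J. \<eta> j = (\<Sum>i\<le>J. \<eta> i * r i j)"
    and ergodic: "ergodic_ctmc (net_states J) (net_rates J lam \<mu> r)"
    and C_finite: "\<forall>j\<in>{1..J}. summable (\<lambda>m. \<Prod>k\<in>{1..m}. \<eta> j / \<mu> j k)"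
    and gamma_range: "\<forall>j\<in>{1..J}. 0 \<le> \<gamma> j \<and> \<gamma> j \<le> 1"
  defines "\<xi> \<equiv> (\<lambda>n. \<Prod>j\<in>{1..J}. node_factor \<eta> \<mu> j (n j))"
    and "B \<equiv> {j\<in>{1..J}. \<gamma> j = 0}"
    and "W \<equiv> {1..J} - {j\<in>{1..J}. \<gamma> j = 0}"
    and "q\<gamma> \<equiv> net_rates J (\<lambda>i. \<Lambda> * skip_matrix J r (\<lambda>j. if j = 0 then 1 else \<gamma> j) 0 i) (\<lambda>j k. \<gamma> j * \<mu> j k) (skip_matrix J r (\<lambda>j. if j = 0 then 1 else \<gamma> j))"
    and "SB \<equiv> {b :: nat \<Rightarrow> nat. \<forall>j. j \<notin> {j\<in>{1..J}. \<gamma> j = 0} \<longrightarrow> b j = 0}"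
    and "sub \<equiv> (\<lambda>b. {n\<in>net_states J. \<forall>j\<in>{j\<in>{1..J}. \<gamma> j = 0}. n j = b j})"
  shows "stationary_dist (net_states J) q\<gamma> \<xi>
    \<and> (B = {} \<longrightarrow> ergodic_ctmc (net_states J) q\<gamma>)
    \<and> (B \<noteq> {} \<longrightarrow>
         \<not> irreducible_ctmc (net_states J) q\<gamma>
       \<and> (\<forall>b\<in>SB. closed_subset (net_states J) q\<gamma> (sub b))
       \<and> (\<Union>b\<in>SB. sub b) = net_states J
       \<and> (\<forall>b\<in>SB. \<forall>b'\<in>SB. b \<noteq> b' \<longrightarrow> sub b \<inter> sub b' = {})
       \<and> infinite (sub ` SB)
       \<and> (\<forall>\<phi> :: (nat \<Rightarrow> nat) \<Rightarrow> real.
            (\<forall>b\<in>SB. 0 \<le> \<phi> b) \<and> (\<phi> has_sum 1) SB \<longrightarrow>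
            stationary_dist (net_states J) q\<gamma>
              (\<lambda>n. (\<Prod>j\<in>W. node_factor \<eta> \<mu> j (n j)) * \<phi> (\<lambda>j. if j \<in> B then n j else 0))))"
proof -
  \<comment> \<open>The ergodicity of the unmodified network and the entries \<open>r 0 j\<close> are not needed.\<close>
  interpret jackson_skipping J r \<mu> \<eta> \<gamma>
  proof
    show "\<eta> 0 > 0" using eta_0 lam_pos by simp
  qed (use r_nonneg r_stoch r_irred r_00 eta_traffic mu_pos C_finite gamma_range in auto)
  have B: "B = frozen" and W: "W = {1..J} - frozen" and SB: "SB = configurations frozen"
    and sub: "sub = fibre J frozen" and q: "q\<gamma> = q"
    unfolding B_def W_def SB_def sub_def q\<gamma>_def fibre_def configurations_def eta_0 by auto
  have "B \<subseteq> {1..J}" unfolding B by auto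
  then show ?thesis
    unfolding B W SB sub q \<xi>_def
    using \<xi>_stationary q_ergodic q_not_irreducible q_closed_fibre fibres_cover fibres_disjoint infinite_fibres
      product_form_stationary[OF order_refl]
    by auto
qed


end
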